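(* Let the system $x^+=f(x,u)$, $\zeta=g(x,u)$ be flat with flat output $y=\varphi(\zeta_{[-Q_1,-1]},x,u,u_{[1,Q_2]})$, and let $z^+=\psi_x(z,v)$, $\eta=\psi_u(z,v)$ be its associated system. Then: (i) The associated system is backward-flat with backward-flat output $\hat y=\varphi(\psi_x(z,v),\psi_u(z,v),\eta_{[-1,-Q_2]})=\hat\varphi(\eta_{[-Q_2,-1]},z,v)$ if and only if the original system is forward-flat with forward-flat output $y=\varphi(x,u,u_{[1,Q_2]})$. (ii) The associated system is forward-flat with forward-flat output $\hat y=\varphi(v_{[Q_1,1]},\psi_x(z,v),\psi_u(z,v))=\hat\varphi(z,v,v_{[1,Q_1]})$ if and only if the original system is backward-flat with backward-flat output $y=\varphi(\zeta_{[-Q_1,-1]},x,u)$. (In these formulas, $\zeta_{[-j]}$ is replaced by $v_{[j]}$ and $u_{[j]}$ by $\eta_{[-j]}$, componentwise.)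
   Context: Consider a nonlinear time-invariant discrete-time system $x^{i,+}=f^i(x,u)$, $i=1,\dots,n$, with $x\in\mathbb{R}^n$, $u\in\mathbb{R}^m$, smooth $f$, $\operatorname{rank}(\partial_u f)=m$, and $\operatorname{rank}(\partial_{(x,u)}f)=n$. Choose $m$ smooth functions $g(x,u)$ such that $(x,u)\mapsto(f(x,u),g(x,u))$ is a local diffeomorphism, with local inverse $x=\psi_x(x^+,\zeta)$, $u=\psi_u(x^+,\zeta)$. The associated system is $z^+=\psi_x(z,v)$, $\eta=\psi_u(z,v)$, $z\in\mathbb{R}^n$, $v,\eta\in\mathbb{R}^m$. Notation: $w_{[\alpha]}$ is the $\alpha$-th forward shift, $w_{[-\alpha]}$ the $\alpha$-th backward shift; for multi-indices, $y_{[-S_1,S_2]}$ denotes all $y^j_{[i]}$ with $-s_{1,j}\le i\le s_{2,j}$. Flatness: the system is flat around an equilibrium if there exist an $m$-tuple $y=\varphi(\zeta_{[-Q_1,-1]},x,u,u_{[1,Q_2]})$ (flat output, with $\zeta=g(x,u)$) and maps $x=F_x(y_{[-R_1,R_2-1]})$, $u=F_u(y_{[-R_1,R_2]})$ establishing locally a one-to-one correspondence between system trajectories and arbitrary sequences $y(k)\in\mathbb{R}^m$. Forward-flat: flat with a flat output $y=\varphi(x,u,u_{[1,Q_2]})$ (no backward shifts) and $R_1=(0,\dots,0)$, i.e. $x=F_x(y_{[0,R_2-1]})$, $u=F_u(y_{[0,R_2]})$. Backward-flat: flat with a flat output $y=\varphi(\zeta_{[-Q_1,-1]},x,u)$ (no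 forward shifts) and $R_2=(0,\dots,0)$, i.e. $x=F_x(y_{[-R_1,-1]})$, $u=F_u(y_{[-R_1,0]})$. The same definitions apply to the associated system with $(z,v,\eta,\psi_x,\psi_u)$ in place of $(x,u,\zeta,f,g)$. *)

theory Defs
  imports "HOL-Analysis.Analysis"
begin

fun iter_pd :: "'a::euclidean_space list \<Rightarrow> ('a \<Rightarrow> 'b::real_normed_vector) \<Rightarrow> 'a \<Rightarrow> 'b" where
  "iter_pd [] F = F"
| "iter_pd (d # ds) F = (\<lambda>w. vector_derivative (\<lambda>t. iter_pd ds F (w + t *\<^sub>R d)) (at 0))"

definition Cinf_on :: "'a::euclidean_space set \<Rightarrow> ('a \<Rightarrow> 'b::real_normed_vector) \<Rightarrow> bool" where
  "Cinf_on S F \<longleftrightarrow> open S \<and>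
     (\<forall>ds. set ds \<subseteq> Basis \<longrightarrow>
        continuous_on S (iter_pd ds F) \<and>
        (\<forall>w\<in>S. \<forall>b\<in>Basis. (\<lambda>t. iter_pd ds F (w + t *\<^sub>R b)) differentiable (at 0)))"

text \<open>Maps of finitely many shifts of a sequence are modelled as maps on sequences
  (int \<Rightarrow> 'a) (with the product topology) that depend only on finitely many indices.\<close>
fun iter_pd_seq :: "(int \<times> 'a::euclidean_space) list \<Rightarrow> ((int \<Rightarrow> 'a) \<Rightarrow> 'b::real_normed_vector)
                     \<Rightarrow> (int \<Rightarrow> 'a) \<Rightarrow> 'b" where
  "iter_pd_seq [] F = F"
| "iter_pd_seq (d # ds) F =
     (\<lambda>w. vector_derivative (\<lambda>t. iter_pd_seq ds F (w(fst d := w (fst d) + t *\<^sub>R snd d))) (at 0))"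

definition Cinf_seq_on :: "(int \<Rightarrow> 'a::euclidean_space) set \<Rightarrow> ((int \<Rightarrow> 'a) \<Rightarrow> 'b::real_normed_vector) \<Rightarrow> bool" where
  "Cinf_seq_on S F \<longleftrightarrow> open S \<and>
     (\<forall>ds. (\<forall>d\<in>set ds. snd d \<in> Basis) \<longrightarrow>
        continuous_on S (iter_pd_seq ds F) \<and>
        (\<forall>w\<in>S. \<forall>i. \<forall>b\<in>Basis. (\<lambda>t. iter_pd_seq ds F (w(i := w i + t *\<^sub>R b))) differentiable (at 0)))"

definition depends_only :: "'i set \<Rightarrow> (('i \<Rightarrow> 'a) \<Rightarrow> 'b) \<Rightarrow> bool" where
  "depends_only I F \<longleftrightarrow> (\<forall>w w'. (\<forall>i\<in>I. w i = w' i) \<longrightarrow> F w = F w')"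

definition is_traj :: "('x \<Rightarrow> 'u \<Rightarrow> 'x) \<Rightarrow> (int \<Rightarrow> 'x) \<Rightarrow> (int \<Rightarrow> 'u) \<Rightarrow> bool" where
  "is_traj f x u \<longleftrightarrow> (\<forall>k. x (k + 1) = f (x k) (u k))"

text \<open>The coordinates (..., zeta[-2], zeta[-1], (x,u), u[1], u[2], ...) of a trajectory at time k,
  packed as a sequence indexed by the shift i: at i = 0 the pair (x(k),u(k)); at i < 0 the
  value zeta(k+i) = g(x(k+i),u(k+i)); at i > 0 the value u(k+i) (state slot unused = 0).\<close>
definition traj_coords :: "('x::zero \<Rightarrow> 'u \<Rightarrow> 'u) \<Rightarrow> (int \<Rightarrow> 'x) \<Rightarrow> (int \<Rightarrow> 'u) \<Rightarrow> int \<Rightarrow> int \<Rightarrow> 'x \<times> 'u" where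
  "traj_coords g x u k = (\<lambda>i. (if i = 0 then x k else 0,
                               if i < 0 then g (x (k + i)) (u (k + i)) else u (k + i)))"

text \<open>Flat output phi (a smooth map of finitely many of the above coordinates) with
  parametrisation x = F_x(y[-r1 .. r2-1]), u = F_u(y[-r1 .. r2]), establishing locally
  (near the equilibrium (x0,u0)) a one-to-one correspondence between trajectories and
  sequences y.\<close>
definition flat_output_win ::
  "('x::euclidean_space \<Rightarrow> 'u::euclidean_space \<Rightarrow> 'x) \<Rightarrow> ('x \<Rightarrow> 'u \<Rightarrow> 'u) \<Rightarrow> 'x \<Rightarrow> 'u
   \<Rightarrow> ((int \<Rightarrow> 'x \<times> 'u) \<Rightarrow> 'u) \<Rightarrow> nat \<Rightarrow> nat \<Rightarrow> bool" where
  "flat_output_win f g x0 u0 \<phi> r1 r2 \<longleftrightarrow>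
     (let c0 = traj_coords g (\<lambda>_. x0) (\<lambda>_. u0) 0; y0 = \<phi> c0 in
      (\<exists>q1 q2 :: nat. depends_only {- int q1 .. int q2} \<phi>) \<and>
      (\<exists>S. c0 \<in> S \<and> Cinf_seq_on S \<phi>) \<and>
      (\<exists>Fx Fu. depends_only {- int r1 .. int r2 - 1} Fx \<and> depends_only {- int r1 .. int r2} Fu \<and>
         (\<exists>T. (\<lambda>_. y0) \<in> T \<and> Cinf_seq_on T Fx \<and> Cinf_seq_on T Fu) \<and>
         (\<exists>N W. open N \<and> (x0, u0) \<in> N \<and> open W \<and> y0 \<in> W \<and>
            (\<forall>x u. is_traj f x u \<and> (\<forall>k. (x k, u k) \<in> N) \<longrightarrow>
               (\<forall>k. x k = Fx (\<lambda>i. \<phi> (traj_coords g x u (k + i))) \<and>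
                    u k = Fu (\<lambda>i. \<phi> (traj_coords g x u (k + i))))) \<and>
            (\<forall>y. (\<forall>k. y k \<in> W) \<longrightarrow>
               (let x = (\<lambda>k. Fx (\<lambda>i. y (k + i))); u = (\<lambda>k. Fu (\<lambda>i. y (k + i))) in
                  is_traj f x u \<and> (\<forall>k. y k = \<phi> (traj_coords g x u k)))))))"

definition flat_output where
  "flat_output f g x0 u0 \<phi> \<longleftrightarrow> (\<exists>r1 r2. flat_output_win f g x0 u0 \<phi> r1 r2)"

text \<open>Forward-flat output: no backward shifts of zeta in phi and R1 = 0.\<close>
definition forward_flat_output where
  "forward_flat_output f g x0 u0 \<phi> \<longleftrightarrow>
     depends_only {i. 0 \<le> i} \<phi> \<and> (\<exists>r2. flat_output_win f g x0 u0 \<phi> 0 r2)"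

text \<open>Backward-flat output: no forward shifts of u in phi and R2 = 0.\<close>
definition backward_flat_output where
  "backward_flat_output f g x0 u0 \<phi> \<longleftrightarrow>
     depends_only {i. i \<le> 0} \<phi> \<and> (\<exists>r1. flat_output_win f g x0 u0 \<phi> r1 0)"

definition local_diffeo_inv :: "('a::euclidean_space \<Rightarrow> 'b::euclidean_space) \<Rightarrow> ('b \<Rightarrow> 'a) \<Rightarrow> 'a \<Rightarrow> bool" where
  "local_diffeo_inv F G p \<longleftrightarrow>
     (\<exists>N. open N \<and> p \<in> N \<and> open (F ` N) \<and> (\<forall>a\<in>N. G (F a) = a) \<and>
          Cinf_on N F \<and> Cinf_on (F ` N) G)"

text \<open>Output of the associated system obtained from phi by substituting
  x := psi_x(z,v), u := psi_u(z,v), zeta[-j] := v[j], u[j] := eta[-j].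
  In the coordinates of the associated system (z at index 0 together with v, eta[i] at i<0,
  v[i] at i>0) this is the following map.\<close>
definition assoc_output :: "('x::zero \<Rightarrow> 'u \<Rightarrow> 'x) \<Rightarrow> ('x \<Rightarrow> 'u \<Rightarrow> 'u)
    \<Rightarrow> ((int \<Rightarrow> 'x \<times> 'u) \<Rightarrow> 'u) \<Rightarrow> ((int \<Rightarrow> 'x \<times> 'u) \<Rightarrow> 'u)" where
  "assoc_output \<psi>x \<psi>u \<phi> = (\<lambda>c. \<phi> (\<lambda>i. if i = 0
        then (\<psi>x (fst (c 0)) (snd (c 0)), \<psi>u (fst (c 0)) (snd (c 0)))
        else (0, snd (c (- i)))))"

end

theory Submission
  imports Defs
begin

text \<open>The associated system is the original one run backwards in time: near the equilibrium,
  (x, u) is a trajectory of the system exactly when z(k) = x(-k), v(k) = \<zeta>(-k-1) is a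
  trajectory of the associated system, and then \<eta>(k) = u(-k-1). This reversal turns \<zeta>[-j]
  into v[j] and u[j] into \<eta>[-j], so the output \<phi> read in the coordinates of the associated
  system takes the value y(-k-1) at time k. A parametrisation x = Fx(y[-r1, r2-1]),
  u = Fu(y[-r1, r2]) of the system thus becomes one of the associated system, z(k) and v(k) being
  read off reversed windows of the new output, with the roles of r1 and r2 exchanged:
  forward-flat outputs become backward-flat and vice versa. Since the local inverse of \<psi> is
  (f, g), the same argument runs in the other direction. The analytic work is to show that
  smoothness survives these substitutions, i.e. a chain rule for maps of finitely many shifts.\<close>

section \<open>Smooth maps of finitely many shifts\<close>

definition seq_partial :: "int \<times> 'a::euclidean_space \<Rightarrow> ((int \<Rightarrow> 'a) \<Rightarrow> 'b::real_normed_vector)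
    \<Rightarrow> (int \<Rightarrow> 'a) \<Rightarrow> 'b" where
  "seq_partial d F w = vector_derivative (\<lambda>t. F (w(fst d := w (fst d) + t *\<^sub>R snd d))) (at 0)"

lemma iter_pd_seq_Cons: "iter_pd_seq (d # ds) F = seq_partial d (iter_pd_seq ds F)"
  by (rule ext) (simp add: seq_partial_def)

lemma iter_pd_seq_snoc: "iter_pd_seq (ds @ [d]) F = iter_pd_seq ds (seq_partial d F)"
  by (induction ds) (simp_all add: iter_pd_seq_Cons del: iter_pd_seq.simps(2))

lemma has_vector_derivative_seq_partial:
  assumes "(\<lambda>t. F (w(i := w i + t *\<^sub>R b))) differentiable (at 0)"
  shows "((\<lambda>t. F (w(i := w i + t *\<^sub>R b))) has_vector_derivative seq_partial (i, b) F w) (at 0)"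
  using assms by (simp add: seq_partial_def vector_derivative_works)

lemma seq_partial_eqI:
  assumes "((\<lambda>t. F (w(i := w i + t *\<^sub>R b))) has_vector_derivative D) (at 0)"
  shows "seq_partial (i, b) F w = D"
  using vector_derivative_at[OF assms] by (simp add: seq_partial_def)

lemma continuous_on_fun_upd_line:
  fixes w :: "'i \<Rightarrow> 'a::real_normed_vector"
  shows "continuous_on UNIV (\<lambda>t::real. w(i := w i + t *\<^sub>R b))"
proof (rule continuous_on_coordinatewise_then_product)
  fix j show "continuous_on UNIV (\<lambda>t. (w(i := w i + t *\<^sub>R b)) j)"
    by (cases "j = i") (auto intro!: continuous_intros)
qed

lemma eventually_fun_upd_line_in_open:
  fixes w :: "int \<Rightarrow> 'a::real_normed_vector"
  assumes "open T" "w \<in> T"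
  shows "eventually (\<lambda>t. w(i := w i + t *\<^sub>R b) \<in> T) (nhds 0)"
proof -
  have "open {t. w(i := w i + t *\<^sub>R b) \<in> T}"
    using open_vimage[OF assms(1) continuous_on_fun_upd_line] by (simp add: vimage_def)
  moreover have "0 \<in> {t. w(i := w i + t *\<^sub>R b) \<in> T}" using assms(2) by simp
  ultimately show ?thesis using eventually_nhds by blast
qed

lemma seq_partial_cong_open:
  assumes "open T" "\<And>w. w \<in> T \<Longrightarrow> F w = F' w" "w \<in> T"
  shows "seq_partial d F w = seq_partial d F' w"
proof -
  have "eventually (\<lambda>t. t \<in> UNIV \<longrightarrow> F (w(fst d := w (fst d) + t *\<^sub>R snd d)) =
      F' (w(fst d := w (fst d) + t *\<^sub>R snd d))) (nhds 0)"
    using eventually_fun_upd_line_in_open[OF assms(1,3), where i="fst d" and b="snd d"]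
    by eventually_elim (simp add: assms(2))
  then show ?thesis by (simp add: seq_partial_def vector_derivative_cong_eq)
qed

lemma differentiable_at_cong_nhds:
  fixes f g :: "real \<Rightarrow> 'b::real_normed_vector"
  assumes "eventually (\<lambda>t. f t = g t) (nhds x)" "f differentiable (at x)"
  shows "g differentiable (at x)"
proof -
  have "f x = g x" using eventually_nhds_x_imp_x[OF assms(1)] .
  have "(f has_vector_derivative vector_derivative f (at x)) (at x)"
    using assms(2) vector_derivative_works by blast
  then have "(g has_vector_derivative vector_derivative f (at x)) (at x)"
    using has_vector_derivative_cong_ev[where f=f and g=g and x=x and S=UNIV] assms(1) \<open>f x = g x\<close> by simp
  then show ?thesis by (rule differentiableI_vector)
qed

fun seq_smooth_upto :: "nat \<Rightarrow> (int \<Rightarrow> 'a::euclidean_space) set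
    \<Rightarrow> ((int \<Rightarrow> 'a) \<Rightarrow> 'b::real_normed_vector) \<Rightarrow> bool" where
  "seq_smooth_upto 0 T F \<longleftrightarrow> open T \<and> continuous_on T F \<and>
     (\<forall>w\<in>T. \<forall>i. \<forall>b\<in>Basis. (\<lambda>t. F (w(i := w i + t *\<^sub>R b))) differentiable (at 0))"
| "seq_smooth_upto (Suc n) T F \<longleftrightarrow>
     seq_smooth_upto 0 T F \<and> (\<forall>i. \<forall>b\<in>Basis. seq_smooth_upto n T (seq_partial (i, b) F))"

lemma seq_smooth_upto_iff_iter_pd_seq:
  "seq_smooth_upto n T F \<longleftrightarrow> open T \<and>
     (\<forall>ds. length ds \<le> n \<longrightarrow> (\<forall>d\<in>set ds. snd d \<in> Basis) \<longrightarrow>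
        continuous_on T (iter_pd_seq ds F) \<and>
        (\<forall>w\<in>T. \<forall>i. \<forall>b\<in>Basis. (\<lambda>t. iter_pd_seq ds F (w(i := w i + t *\<^sub>R b))) differentiable (at 0)))"
proof (induction n arbitrary: F)
  case 0
  have "(\<forall>ds. length ds \<le> 0 \<longrightarrow> Q ds) \<longleftrightarrow> Q []" for Q :: "(int \<times> 'a) list \<Rightarrow> bool"
    by auto
  then show ?case by (simp add: fun_upd_def)
next
  case (Suc n)
  define P where "P F ds \<longleftrightarrow> (\<forall>d\<in>set ds. snd d \<in> Basis) \<longrightarrow> continuous_on T (iter_pd_seq ds F) \<and>
    (\<forall>w\<in>T. \<forall>i. \<forall>b\<in>Basis. (\<lambda>t. iter_pd_seq ds F (w(i := w i + t *\<^sub>R b))) differentiable (at 0))"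
    for F :: "(int \<Rightarrow> 'a) \<Rightarrow> 'b" and ds
  have snoc: "P F (ds @ [(i, b)]) \<longleftrightarrow> (b \<in> Basis \<longrightarrow> P (seq_partial (i, b) F) ds)" for F ds i b
    by (auto simp: P_def iter_pd_seq_snoc)
  have "(\<forall>ds. length ds \<le> Suc n \<longrightarrow> P F ds) \<longleftrightarrow>
      P F [] \<and> (\<forall>i b ds. length ds \<le> n \<longrightarrow> P F (ds @ [(i, b)]))"
  proof (intro iffI conjI allI impI)
    fix ds :: "(int \<times> 'a) list"
    assume "P F [] \<and> (\<forall>i b ds. length ds \<le> n \<longrightarrow> P F (ds @ [(i, b)]))" "length ds \<le> Suc n"
    then show "P F ds" by (cases ds rule: rev_exhaust) auto
  qed auto
  moreover have "seq_smooth_upto (Suc n) T F \<longleftrightarrow>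
      open T \<and> P F [] \<and> (\<forall>i b ds. length ds \<le> n \<longrightarrow> b \<in> Basis \<longrightarrow> P (seq_partial (i, b) F) ds)"
    unfolding seq_smooth_upto.simps Suc.IH P_def by auto
  ultimately show ?case unfolding P_def[symmetric] snoc by blast
qed

lemma Cinf_seq_on_iff_smooth_upto: "Cinf_seq_on T F \<longleftrightarrow> (\<forall>n. seq_smooth_upto n T F)"
proof
  show "\<forall>n. seq_smooth_upto n T F" if "Cinf_seq_on T F"
    using that by (simp add: Cinf_seq_on_def seq_smooth_upto_iff_iter_pd_seq)
next
  assume smooth: "\<forall>n. seq_smooth_upto n T F"
  show "Cinf_seq_on T F"
    unfolding Cinf_seq_on_def
  proof (intro conjI allI impI)
    show "open T" using smooth seq_smooth_upto.simps(1) by blast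
  next
    fix ds :: "(int \<times> 'a) list" assume "\<forall>d\<in>set ds. snd d \<in> Basis"
    then show "continuous_on T (iter_pd_seq ds F)"
      using smooth[rule_format, of "length ds"] unfolding seq_smooth_upto_iff_iter_pd_seq by blast
  next
    fix ds :: "(int \<times> 'a) list" assume "\<forall>d\<in>set ds. snd d \<in> Basis"
    then show "\<forall>w\<in>T. \<forall>i. \<forall>b\<in>Basis. (\<lambda>t. iter_pd_seq ds F (w(i := w i + t *\<^sub>R b))) differentiable (at 0)"
      using smooth[rule_format, of "length ds"] unfolding seq_smooth_upto_iff_iter_pd_seq by blast
  qed
qed


lemma seq_smooth_upto_Suc_imp: "seq_smooth_upto (Suc n) T F \<Longrightarrow> seq_smooth_upto n T F"
  by (induction n arbitrary: F) auto

lemma seq_smooth_upto_0_cong: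
  assumes "seq_smooth_upto 0 T F" "\<And>w. w \<in> T \<Longrightarrow> F w = F' w"
  shows "seq_smooth_upto 0 T F'"
proof -
  have T: "open T" and "continuous_on T F" using assms(1) by simp_all
  then have "continuous_on T F'" using continuous_on_cong[of T T F F'] assms(2) by simp
  moreover have "(\<lambda>t. F' (w(i := w i + t *\<^sub>R b))) differentiable (at 0)"
    if "w \<in> T" "b \<in> Basis" for w i b
  proof (rule differentiable_at_cong_nhds)
    show "(\<lambda>t. F (w(i := w i + t *\<^sub>R b))) differentiable (at 0)"
      using assms(1) that by simp
    show "eventually (\<lambda>t. F (w(i := w i + t *\<^sub>R b)) = F' (w(i := w i + t *\<^sub>R b))) (nhds 0)"
      using eventually_fun_upd_line_in_open[OF T that(1), where i=i and b=b]
      by eventually_elim (rule assms(2))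
  qed
  ultimately show ?thesis using T by simp
qed

lemma seq_smooth_upto_cong:
  assumes "seq_smooth_upto n T F" "\<And>w. w \<in> T \<Longrightarrow> F w = F' w"
  shows "seq_smooth_upto n T F'"
  using assms
proof (induction n arbitrary: F F')
  case 0
  then show ?case by (rule seq_smooth_upto_0_cong)
next
  case (Suc n)
  have T: "open T" using Suc.prems(1) by simp
  have "seq_smooth_upto n T (seq_partial (i, b) F')" if "b \<in> Basis" for i b
  proof (rule Suc.IH)
    show "seq_smooth_upto n T (seq_partial (i, b) F)" using Suc.prems(1) that by simp
    show "seq_partial (i, b) F w = seq_partial (i, b) F' w" if "w \<in> T" for w
      using T Suc.prems(2) that by (rule seq_partial_cong_open)
  qed
  moreover have "seq_smooth_upto 0 T F" using Suc.prems(1) by simp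
  then have "seq_smooth_upto 0 T F'" using Suc.prems(2) by (rule seq_smooth_upto_0_cong)
  ultimately show ?case by simp
qed

lemma seq_smooth_upto_subset:
  "seq_smooth_upto n T F \<Longrightarrow> open T' \<Longrightarrow> T' \<subseteq> T \<Longrightarrow> seq_smooth_upto n T' F"
  by (induction n arbitrary: F) (auto intro: continuous_on_subset)

lemma seq_partial_const: "seq_partial d (\<lambda>_. c) = (\<lambda>_. 0)"
  by (rule ext) (simp add: seq_partial_def)

lemma seq_smooth_upto_const: "open T \<Longrightarrow> seq_smooth_upto n T (\<lambda>_. c)"
  by (induction n arbitrary: c) (simp_all add: seq_partial_const)

lemma seq_smooth_upto_add:
  assumes "seq_smooth_upto n T F" "seq_smooth_upto n T G"
  shows "seq_smooth_upto n T (\<lambda>w. F w + G w)"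
  using assms
proof (induction n arbitrary: F G)
  case 0
  then show ?case by (auto intro!: continuous_intros)
next
  case (Suc n)
  have "seq_smooth_upto n T (seq_partial (i, b) (\<lambda>w. F w + G w))" if b: "b \<in> Basis" for i b
  proof (rule seq_smooth_upto_cong)
    show "seq_smooth_upto n T (\<lambda>w. seq_partial (i, b) F w + seq_partial (i, b) G w)"
      using Suc b by simp
    fix w assume "w \<in> T"
    then have "(\<lambda>t. F (w(i := w i + t *\<^sub>R b))) differentiable (at 0)"
      "(\<lambda>t. G (w(i := w i + t *\<^sub>R b))) differentiable (at 0)"
      using Suc.prems b by simp_all
    then show "seq_partial (i, b) F w + seq_partial (i, b) G w = seq_partial (i, b) (\<lambda>w. F w + G w) w"
      by (intro seq_partial_eqI[symmetric] has_vector_derivative_add has_vector_derivative_seq_partial)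
  qed
  moreover have "seq_smooth_upto 0 T (\<lambda>w. F w + G w)"
    using Suc.prems by (auto intro!: continuous_intros)
  ultimately show ?case by simp
qed

lemma seq_smooth_upto_sum:
  assumes "finite A" "open T" "\<And>x. x \<in> A \<Longrightarrow> seq_smooth_upto n T (F x)"
  shows "seq_smooth_upto n T (\<lambda>w. \<Sum>x\<in>A. F x w)"
  using assms(1,3)
  by (induction A rule: finite_induct)
     (simp_all add: seq_smooth_upto_const[OF assms(2)] seq_smooth_upto_add)

lemma seq_smooth_upto_bounded_linear:
  assumes L: "bounded_linear L" and "seq_smooth_upto n T F"
  shows "seq_smooth_upto n T (\<lambda>w. L (F w))"
  using assms(2)
proof (induction n arbitrary: F)
  case 0
  then show ?case
    by (auto intro!: continuous_intros bounded_linear.continuous_on[OF L]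
        differentiable_compose[of L] bounded_linear_imp_differentiable[OF L])
next
  case (Suc n)
  have "seq_smooth_upto n T (seq_partial (i, b) (\<lambda>w. L (F w)))" if b: "b \<in> Basis" for i b
  proof (rule seq_smooth_upto_cong)
    show "seq_smooth_upto n T (\<lambda>w. L (seq_partial (i, b) F w))"
      using Suc b by simp
    fix w assume "w \<in> T"
    then have "(\<lambda>t. F (w(i := w i + t *\<^sub>R b))) differentiable (at 0)"
      using Suc.prems b by simp
    then show "L (seq_partial (i, b) F w) = seq_partial (i, b) (\<lambda>w. L (F w)) w"
      by (intro seq_partial_eqI[symmetric] bounded_linear.has_vector_derivative[OF L]
          has_vector_derivative_seq_partial)
  qed
  moreover have "seq_smooth_upto 0 T (\<lambda>w. L (F w))"
    using Suc.prems
    by (auto intro!: continuous_intros bounded_linear.continuous_on[OF L]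
        differentiable_compose[of L] bounded_linear_imp_differentiable[OF L])
  ultimately show ?case by simp
qed

lemma seq_smooth_upto_scaleR:
  fixes a :: "(int \<Rightarrow> 'a::euclidean_space) \<Rightarrow> real"
  assumes "seq_smooth_upto n T a" "seq_smooth_upto n T F"
  shows "seq_smooth_upto n T (\<lambda>w. a w *\<^sub>R F w)"
  using assms
proof (induction n arbitrary: a F)
  case 0
  then show ?case by (auto intro!: continuous_intros)
next
  case (Suc n)
  have "seq_smooth_upto n T (seq_partial (i, b) (\<lambda>w. a w *\<^sub>R F w))" if b: "b \<in> Basis" for i b
  proof (rule seq_smooth_upto_cong)
    show "seq_smooth_upto n T
        (\<lambda>w. a w *\<^sub>R seq_partial (i, b) F w + seq_partial (i, b) a w *\<^sub>R F w)"
    proof -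
      have "seq_smooth_upto n T a" "seq_smooth_upto n T F"
        using Suc.prems seq_smooth_upto_Suc_imp by blast+
      moreover have "seq_smooth_upto n T (seq_partial (i, b) a)"
        "seq_smooth_upto n T (seq_partial (i, b) F)"
        using Suc.prems b by simp_all
      ultimately show ?thesis by (intro seq_smooth_upto_add Suc.IH)
    qed
    fix w assume "w \<in> T"
    then have "(\<lambda>t. a (w(i := w i + t *\<^sub>R b))) differentiable (at 0)"
      "(\<lambda>t. F (w(i := w i + t *\<^sub>R b))) differentiable (at 0)"
      using Suc.prems b by simp_all
    then have "((\<lambda>t. a (w(i := w i + t *\<^sub>R b))) has_field_derivative seq_partial (i, b) a w) (at 0)"
      "((\<lambda>t. F (w(i := w i + t *\<^sub>R b))) has_vector_derivative seq_partial (i, b) F w) (at 0)"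
      by (simp_all add: has_real_derivative_iff_has_vector_derivative has_vector_derivative_seq_partial)
    from has_vector_derivative_scaleR[OF this]
    have "((\<lambda>t. a (w(i := w i + t *\<^sub>R b)) *\<^sub>R F (w(i := w i + t *\<^sub>R b))) has_vector_derivative
        a w *\<^sub>R seq_partial (i, b) F w + seq_partial (i, b) a w *\<^sub>R F w) (at 0)"
      by simp
    then show "a w *\<^sub>R seq_partial (i, b) F w + seq_partial (i, b) a w *\<^sub>R F w =
        seq_partial (i, b) (\<lambda>w. a w *\<^sub>R F w) w"
      by (rule seq_partial_eqI[symmetric])
  qed
  moreover have "seq_smooth_upto 0 T (\<lambda>w. a w *\<^sub>R F w)"
    using Suc.prems by (auto intro!: continuous_intros)
  ultimately show ?case by simp
qed

lemma Cinf_seq_on_open: "Cinf_seq_on T F \<Longrightarrow> open T"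
  by (simp add: Cinf_seq_on_def)

lemma Cinf_seq_on_smooth_upto_0: "Cinf_seq_on T F \<Longrightarrow> seq_smooth_upto 0 T F"
  by (simp add: Cinf_seq_on_iff_smooth_upto)

lemma Cinf_seq_on_continuous: "Cinf_seq_on T F \<Longrightarrow> continuous_on T F"
  using Cinf_seq_on_smooth_upto_0[of T F] by simp

lemma Cinf_seq_on_differentiable:
  "Cinf_seq_on T F \<Longrightarrow> w \<in> T \<Longrightarrow> b \<in> Basis \<Longrightarrow>
     (\<lambda>t. F (w(i := w i + t *\<^sub>R b))) differentiable (at 0)"
  using Cinf_seq_on_smooth_upto_0[of T F] by simp

lemma Cinf_seq_on_partial:
  "Cinf_seq_on T F \<Longrightarrow> b \<in> Basis \<Longrightarrow> Cinf_seq_on T (seq_partial (i, b) F)"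
  unfolding Cinf_seq_on_iff_smooth_upto
proof -
  assume "\<forall>n. seq_smooth_upto n T F" "b \<in> Basis"
  then have "seq_smooth_upto n T (seq_partial (i, b) F)" for n
    using seq_smooth_upto.simps(2)[of n T F] by blast
  then show "\<forall>n. seq_smooth_upto n T (seq_partial (i, b) F)" ..
qed

lemma Cinf_seq_on_subset: "Cinf_seq_on T F \<Longrightarrow> open T' \<Longrightarrow> T' \<subseteq> T \<Longrightarrow> Cinf_seq_on T' F"
  unfolding Cinf_seq_on_iff_smooth_upto by (blast intro: seq_smooth_upto_subset)

lemma Cinf_seq_on_bounded_linear:
  "bounded_linear L \<Longrightarrow> Cinf_seq_on T F \<Longrightarrow> Cinf_seq_on T (\<lambda>w. L (F w))"
  by (simp add: Cinf_seq_on_iff_smooth_upto seq_smooth_upto_bounded_linear)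

lemma Cinf_seq_on_add:
  assumes "Cinf_seq_on T F" "Cinf_seq_on T G"
  shows "Cinf_seq_on T (\<lambda>w. F w + G w)"
  using assms seq_smooth_upto_add[of _ T F G] unfolding Cinf_seq_on_iff_smooth_upto by blast

lemma Cinf_seq_on_Pair:
  assumes "Cinf_seq_on T F" "Cinf_seq_on T G"
  shows "Cinf_seq_on T (\<lambda>w. (F w, G w))"
proof -
  have "Cinf_seq_on T (\<lambda>w. (F w, 0))"
    by (rule Cinf_seq_on_bounded_linear[OF bounded_linear_Pair[OF bounded_linear_ident bounded_linear_zero]
          assms(1)])
  moreover have "Cinf_seq_on T (\<lambda>w. (0, G w))"
    by (rule Cinf_seq_on_bounded_linear[OF bounded_linear_Pair[OF bounded_linear_zero bounded_linear_ident]
          assms(2)])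
  ultimately have "Cinf_seq_on T (\<lambda>w. (F w, 0) + (0, G w))"
    by (rule Cinf_seq_on_add)
  then show ?thesis by simp
qed

section \<open>The chain rule\<close>

lemma open_fun_contains_uniform_ball:
  fixes U :: "('i \<Rightarrow> 'a::metric_space) set"
  assumes "open U" "c \<in> U"
  obtains \<eta> where "\<eta> > 0" "\<And>p. (\<forall>i. dist (p i) (c i) < \<eta>) \<Longrightarrow> p \<in> U"
proof -
  obtain X where X: "c \<in> (\<Pi>\<^sub>E i\<in>UNIV. X i)" "\<forall>i. openin euclidean (X i)"
     "finite {i. X i \<noteq> topspace euclidean}" "(\<Pi>\<^sub>E i\<in>UNIV. X i) \<subseteq> U"
    using product_topology_open_contains_basis[of "\<lambda>i. euclidean" UNIV U c] assms
    unfolding open_fun_def by auto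
  define K where "K = {i. X i \<noteq> UNIV}"
  have K: "finite K" using X(3) by (simp add: K_def)
  have "\<forall>i. \<exists>e>0. ball (c i) e \<subseteq> X i"
    using X(1,2) by (metis PiE_iff UNIV_I open_contains_ball open_openin)
  then obtain e where e: "\<And>i. e i > 0" "\<And>i. ball (c i) (e i) \<subseteq> X i" by metis
  define \<eta> where "\<eta> = (if K = {} then 1 else Min (e ` K))"
  have "\<eta> > 0" using K e(1) by (auto simp: \<eta>_def)
  moreover have "p \<in> U" if "\<forall>i. dist (p i) (c i) < \<eta>" for p
  proof -
    have "p i \<in> X i" for i
    proof (cases "i \<in> K")
      case True
      then have "\<eta> \<le> e i" using K by (auto simp: \<eta>_def)
      then have "dist (c i) (p i) < e i" using that by (simp add: dist_commute) (meson less_le_trans)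
      then show ?thesis using e(2)[of i] by auto
    next
      case False then show ?thesis by (auto simp: K_def)
    qed
    then show ?thesis using X(4) by auto
  qed
  ultimately show ?thesis using that by blast
qed

lemma continuous_on_uniform_nbhd:
  fixes F :: "('i \<Rightarrow> 'a::metric_space) \<Rightarrow> 'b::topological_space"
  assumes F: "continuous_on T F" "open T" "(\<lambda>_. a) \<in> T" and N: "open N" "F (\<lambda>_. a) \<in> N"
    and W: "open W" "a \<in> W"
  obtains W' where "open W'" "a \<in> W'" "W' \<subseteq> W" "\<And>\<omega>. (\<forall>i. \<omega> i \<in> W') \<Longrightarrow> F \<omega> \<in> N"
proof -
  have "open (F -` N \<inter> T)" using F(1,2) N(1) continuous_on_open_vimage by blast
  moreover have "(\<lambda>_. a) \<in> F -` N \<inter> T" using F(3) N(2) by simp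
  ultimately obtain \<eta> where \<eta>: "\<eta> > 0" "\<And>p. (\<forall>i. dist (p i) a < \<eta>) \<Longrightarrow> p \<in> F -` N \<inter> T"
    using open_fun_contains_uniform_ball by blast
  show ?thesis
  proof (rule that[of "W \<inter> ball a \<eta>"])
    show "F \<omega> \<in> N" if "\<forall>i. \<omega> i \<in> W \<inter> ball a \<eta>" for \<omega>
      using \<eta>(2)[of \<omega>] that by (simp add: dist_commute)
    show "open (W \<inter> ball a \<eta>)" using W(1) by blast
    show "a \<in> W \<inter> ball a \<eta>" using W(2) \<eta>(1) by simp
  qed simp
qed

lemma has_vector_derivative_at_0I:
  fixes A :: "real \<Rightarrow> 'b::real_normed_vector"
  assumes "A 0 = 0" "\<And>e. e > 0 \<Longrightarrow> eventually (\<lambda>t. norm (A t - t *\<^sub>R D) \<le> e * \<bar>t\<bar>) (at 0)"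
  shows "(A has_vector_derivative D) (at 0)"
proof -
  have "((\<lambda>t. norm (A t - A 0 - (t - 0) *\<^sub>R D) / norm (t - 0)) \<longlongrightarrow> 0) (at 0)"
  proof (rule tendstoI)
    fix e :: real assume "e > 0"
    have "eventually (\<lambda>t. norm (A t - t *\<^sub>R D) \<le> e / 2 * \<bar>t\<bar>) (at 0)"
      using \<open>e > 0\<close> by (intro assms(2)) simp
    moreover have "eventually (\<lambda>t. t \<noteq> 0) (at (0::real))"
      by (simp add: eventually_at_filter)
    ultimately show "eventually (\<lambda>t. dist (norm (A t - A 0 - (t - 0) *\<^sub>R D) / norm (t - 0)) 0 < e) (at 0)"
    proof eventually_elim
      case (elim t)
      moreover have "e / 2 * \<bar>t\<bar> < e * \<bar>t\<bar>" using \<open>e > 0\<close> elim by simp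
      ultimately have "norm (A t - t *\<^sub>R D) < e * \<bar>t\<bar>" by linarith
      then show ?case using elim by (simp add: assms(1) divide_less_eq)
    qed
  qed
  then show ?thesis
    by (simp add: has_vector_derivative_def has_derivative_iff_norm bounded_linear_scaleR_left)
qed

lemma eventually_real_derivative_bound:
  assumes "(h has_real_derivative h') (at 0)" "e > 0"
  shows "eventually (\<lambda>t. \<bar>h t - h 0 - t * h'\<bar> \<le> e * \<bar>t\<bar>) (at 0)"
proof -
  have "(h has_derivative (\<lambda>x. h' * x)) (at 0)"
    using assms(1) by (simp add: has_field_derivative_def)
  then obtain d where "d > 0" "\<forall>y. norm (y - 0) < d \<longrightarrow> norm (h y - h 0 - h' * (y - 0)) \<le> e * norm (y - 0)"
    using assms(2) unfolding has_derivative_at_alt by blast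
  then show ?thesis
    unfolding eventually_at by (auto simp: mult.commute intro!: exI[of _ d])
qed

lemma has_vector_derivative_shift_0:
  fixes g :: "real \<Rightarrow> 'b::real_normed_vector"
  assumes "((\<lambda>s'. g (s + s')) has_vector_derivative D) (at 0)"
  shows "(g has_vector_derivative D) (at s)"
proof -
  have "((\<lambda>\<sigma>. \<sigma> - s) has_vector_derivative 1) (at s)" by (auto intro!: derivative_eq_intros)
  from vector_diff_chain_at[OF this] assms have "((\<lambda>s'. g (s + s')) \<circ> (\<lambda>\<sigma>. \<sigma> - s) has_vector_derivative D) (at s)"
    by simp
  then show ?thesis by (simp add: o_def)
qed

lemma has_vector_derivative_at_0_scaled_increment:
  fixes A :: "real \<Rightarrow> 'b::real_normed_vector"
  assumes A0: "A 0 = 0" and h: "(h has_real_derivative h') (at 0)" "h 0 = 0"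
    and increment: "\<And>e. e > 0 \<Longrightarrow> eventually (\<lambda>t. norm (A t - h t *\<^sub>R P) \<le> e * \<bar>h t\<bar>) (at 0)"
  shows "(A has_vector_derivative h' *\<^sub>R P) (at 0)"
proof (rule has_vector_derivative_at_0I)
  show "A 0 = 0" by (rule A0)
  fix e :: real assume "e > 0"
  have pos: "norm P + 1 > 0" "\<bar>h'\<bar> + 1 > 0" by (simp_all add: add_nonneg_pos)
  define e1 where "e1 = e / (2 * (norm P + 1))"
  define e2 where "e2 = e / (2 * (\<bar>h'\<bar> + 1))"
  have "e1 > 0" "e2 > 0" using \<open>e > 0\<close> pos by (simp_all add: e1_def e2_def)
  have "eventually (\<lambda>t. \<bar>h t - t * h'\<bar> \<le> e1 * \<bar>t\<bar> \<and> \<bar>h t - t * h'\<bar> \<le> 1 * \<bar>t\<bar> \<and>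
      norm (A t - h t *\<^sub>R P) \<le> e2 * \<bar>h t\<bar>) (at 0)"
    using eventually_real_derivative_bound[OF h(1) \<open>e1 > 0\<close>]
      eventually_real_derivative_bound[OF h(1) zero_less_one] increment[OF \<open>e2 > 0\<close>]
    by eventually_elim (simp add: h(2))
  then show "eventually (\<lambda>t. norm (A t - t *\<^sub>R (h' *\<^sub>R P)) \<le> e * \<bar>t\<bar>) (at 0)"
  proof eventually_elim
    case (elim t)
    have "\<bar>h t\<bar> \<le> \<bar>t * h'\<bar> + \<bar>h t - t * h'\<bar>"
      using abs_triangle_ineq[of "t * h'" "h t - t * h'"] by simp
    then have "\<bar>h t\<bar> \<le> (\<bar>h'\<bar> + 1) * \<bar>t\<bar>" using elim by (simp add: abs_mult algebra_simps)
    then have "e2 * \<bar>h t\<bar> \<le> e2 * ((\<bar>h'\<bar> + 1) * \<bar>t\<bar>)"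
      using \<open>e2 > 0\<close> by (simp add: mult_left_mono)
    also have "\<dots> = e / 2 * \<bar>t\<bar>" using pos by (simp add: e2_def field_simps)
    finally have "norm (A t - h t *\<^sub>R P) \<le> e / 2 * \<bar>t\<bar>"
      using elim by linarith
    moreover have "norm (h t *\<^sub>R P - t *\<^sub>R (h' *\<^sub>R P)) \<le> e / 2 * \<bar>t\<bar>"
    proof -
      have "h t *\<^sub>R P - t *\<^sub>R (h' *\<^sub>R P) = (h t - t * h') *\<^sub>R P"
        by (simp add: scaleR_left_diff_distrib)
      then have "norm (h t *\<^sub>R P - t *\<^sub>R (h' *\<^sub>R P)) \<le> e1 * \<bar>t\<bar> * norm P"
        using elim by (simp add: mult_right_mono)
      also have "\<dots> \<le> e1 * \<bar>t\<bar> * (norm P + 1)"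
        using \<open>e1 > 0\<close> by (simp add: mult_left_mono)
      also have "\<dots> = e / 2 * \<bar>t\<bar>" using pos by (simp add: e1_def field_simps)
      finally show ?thesis .
    qed
    ultimately have "norm (A t - t *\<^sub>R (h' *\<^sub>R P)) \<le> e / 2 * \<bar>t\<bar> + e / 2 * \<bar>t\<bar>"
      by (rule norm_diff_triangle_le)
    then show ?case by simp
  qed
qed

lemma eventually_fun_upd_segment_in_open:
  fixes q :: "real \<Rightarrow> 'i \<Rightarrow> 'a::real_normed_vector"
  assumes U: "open U" "c \<in> U"
    and q: "\<And>t i. dist (q t i) (c i) \<le> m t" and m: "(m \<longlongrightarrow> 0) (at 0)" and h: "(h \<longlongrightarrow> 0) (at 0)"
  shows "eventually (\<lambda>t. \<forall>s \<in> closed_segment 0 (h t). (q t)(j := q t j + s *\<^sub>R b) \<in> U) (at 0)"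
proof -
  obtain \<eta> where \<eta>: "\<eta> > 0" "\<And>p. (\<forall>i. dist (p i) (c i) < \<eta>) \<Longrightarrow> p \<in> U"
    using open_fun_contains_uniform_ball[OF U] by blast
  have "((\<lambda>t. m t + \<bar>h t\<bar> * norm b) \<longlongrightarrow> 0) (at 0)"
    using m h by (intro tendsto_add_zero tendsto_mult_left_zero tendsto_rabs_zero)
  then have "eventually (\<lambda>t. m t + \<bar>h t\<bar> * norm b < \<eta>) (at 0)"
    using \<eta>(1) by (rule order_tendstoD)
  then show ?thesis
  proof eventually_elim
    case (elim t)
    show ?case
    proof (intro ballI \<eta>(2) allI)
      fix s i assume "s \<in> closed_segment 0 (h t)"
      then have "\<bar>s\<bar> \<le> \<bar>h t\<bar>" by (auto simp: closed_segment_eq_real_ivl split: if_splits)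
      then have s: "norm (s *\<^sub>R b) \<le> \<bar>h t\<bar> * norm b" by (simp add: mult_right_mono)
      have "dist (((q t)(j := q t j + s *\<^sub>R b)) i) (c i) \<le> m t + \<bar>h t\<bar> * norm b"
      proof (cases "i = j")
        case True
        have "dist (((q t)(j := q t j + s *\<^sub>R b)) i) (c i) = norm ((q t i - c i) + s *\<^sub>R b)"
          using True by (simp add: dist_norm algebra_simps)
        also have "\<dots> \<le> dist (q t i) (c i) + norm (s *\<^sub>R b)"
          using norm_triangle_ineq[of "q t i - c i" "s *\<^sub>R b"] by (simp add: dist_norm)
        finally show ?thesis using q[of t i] s by linarith
      next
        case False
        then show ?thesis using q[of t i] by (simp add: add_increasing2)
      qed
      also have "\<dots> < \<eta>" by (rule elim)
      finally show "dist (((q t)(j := q t j + s *\<^sub>R b)) i) (c i) < \<eta>" .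
    qed
  qed
qed

lemma norm_increment_fun_upd_segment_le:
  fixes G :: "('i \<Rightarrow> 'a::real_normed_vector) \<Rightarrow> 'c::real_normed_vector"
  assumes G': "\<And>p. p \<in> S \<Longrightarrow> ((\<lambda>s. G (p(j := p j + s *\<^sub>R b))) has_vector_derivative G' p) (at 0)"
    and near: "\<And>s. s \<in> closed_segment 0 H \<Longrightarrow> w(j := w j + s *\<^sub>R b) \<in> G' -` ball P e \<inter> S"
  shows "norm (G (w(j := w j + H *\<^sub>R b)) - G w - H *\<^sub>R P) \<le> 3 * e * \<bar>H\<bar>"
proof -
  let ?p = "\<lambda>s. w(j := w j + s *\<^sub>R b)"
  have close: "norm (G' (?p s) - P) < e" if "s \<in> closed_segment 0 H" for s
    using near[OF that] by (simp add: dist_norm norm_minus_commute)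
  have der: "((\<lambda>s. G (?p s)) has_vector_derivative G' (?p s)) (at s within closed_segment 0 H)"
    if "s \<in> closed_segment 0 H" for s
  proof -
    have shift: "(\<lambda>s'. G (?p (s + s'))) = (\<lambda>s'. G ((?p s)(j := ?p s j + s' *\<^sub>R b)))"
      by (simp add: fun_eq_iff scaleR_add_left add.assoc)
    have "?p s \<in> S" using near[OF that] by blast
    then have "((\<lambda>s'. G (?p (s + s'))) has_vector_derivative G' (?p s)) (at 0)"
      unfolding shift by (rule G')
    then show ?thesis by (rule has_vector_derivative_at_within[OF has_vector_derivative_shift_0])
  qed
  have near0: "norm (G' w - P) < e" using close[OF ends_in_segment(1)] by simp
  have bound: "norm (G' (?p s) - G' (?p 0)) \<le> 2 * e" if "s \<in> closed_segment 0 H" for s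
  proof -
    have "norm (G' (?p s) - G' (?p 0)) \<le> norm (G' (?p s) - P) + norm (G' w - P)"
      using norm_triangle_ineq4[of "G' (?p s) - P" "G' w - P"] by simp
    then show ?thesis using close[OF that] near0 by linarith
  qed
  have "norm (G (?p H) - G (?p 0) - (H - 0) *\<^sub>R G' (?p 0)) \<le> norm (H - 0) * (2 * e)"
    by (rule vector_differentiable_bound_linearization[OF der subset_refl bound ends_in_segment(1)])
  then have "norm (G (?p H) - G w - H *\<^sub>R G' w) \<le> \<bar>H\<bar> * (2 * e)"
    by simp
  moreover have "norm (H *\<^sub>R G' w - H *\<^sub>R P) \<le> \<bar>H\<bar> * e"
    using near0 by (simp add: mult_left_mono flip: scaleR_diff_right)
  ultimately have "norm (G (?p H) - G w - H *\<^sub>R P) \<le> \<bar>H\<bar> * (2 * e) + \<bar>H\<bar> * e"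
    by (rule norm_diff_triangle_le)
  then show ?thesis by (simp add: algebra_simps)
qed

lemma has_vector_derivative_coordinate_increment:
  fixes G :: "(int \<Rightarrow> 'a::real_normed_vector) \<Rightarrow> 'c::real_normed_vector"
  assumes S: "open S" "c \<in> S"
    and G': "\<And>p. p \<in> S \<Longrightarrow> ((\<lambda>s. G (p(j := p j + s *\<^sub>R b))) has_vector_derivative G' p) (at 0)"
    and G'_cont: "continuous_on S G'"
    and q: "\<And>t i. dist (q t i) (c i) \<le> m t" and m: "(m \<longlongrightarrow> 0) (at 0)"
    and h: "(h has_real_derivative h') (at 0)" "h 0 = 0"
  shows "((\<lambda>t. G ((q t)(j := q t j + h t *\<^sub>R b)) - G (q t)) has_vector_derivative h' *\<^sub>R G' c) (at 0)"
proof (rule has_vector_derivative_at_0_scaled_increment[OF _ h])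
  show "G ((q 0)(j := q 0 j + h 0 *\<^sub>R b)) - G (q 0) = 0" using h(2) by simp
  fix e :: real assume "e > 0"
  have "open (G' -` ball (G' c) (e / 3) \<inter> S)"
    using G'_cont S(1) continuous_on_open_vimage by blast
  moreover have "c \<in> G' -` ball (G' c) (e / 3) \<inter> S" using S(2) \<open>e > 0\<close> by simp
  moreover have "(h \<longlongrightarrow> 0) (at 0)" using DERIV_isCont[OF h(1)] h(2) by (simp add: isCont_def)
  ultimately have "eventually (\<lambda>t. \<forall>s \<in> closed_segment 0 (h t).
      (q t)(j := q t j + s *\<^sub>R b) \<in> G' -` ball (G' c) (e / 3) \<inter> S) (at 0)"
    using q m by (intro eventually_fun_upd_segment_in_open)
  then show "eventually (\<lambda>t. norm (G ((q t)(j := q t j + h t *\<^sub>R b)) - G (q t) - h t *\<^sub>R G' c)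
      \<le> e * \<bar>h t\<bar>) (at 0)"
  proof eventually_elim
    case (elim t)
    have "norm (G ((q t)(j := q t j + h t *\<^sub>R b)) - G (q t) - h t *\<^sub>R G' c) \<le> 3 * (e / 3) * \<bar>h t\<bar>"
      by (rule norm_increment_fun_upd_segment_le[OF G' bspec[OF elim]])
    then show ?case by simp
  qed
qed

text \<open>Moving the coordinates of c one direction at a time reduces the chain rule to increments
  along a single coordinate line.\<close>
definition coord_displace :: "(int \<Rightarrow> 'a::real_vector) \<Rightarrow> (int \<times> 'a) set \<Rightarrow> (int \<times> 'a \<Rightarrow> real \<Rightarrow> real)
    \<Rightarrow> real \<Rightarrow> int \<Rightarrow> 'a" where
  "coord_displace c D h t = (\<lambda>i. c i + (\<Sum>d\<in>D. if fst d = i then h d t *\<^sub>R snd d else 0))"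

lemma coord_displace_empty [simp]: "coord_displace c {} h t = c"
  by (simp add: coord_displace_def)

lemma coord_displace_insert:
  assumes "finite D" "d \<notin> D"
  shows "coord_displace c (insert d D) h t =
    (coord_displace c D h t)(fst d := coord_displace c D h t (fst d) + h d t *\<^sub>R snd d)"
  using assms by (auto simp: coord_displace_def fun_eq_iff)

lemma dist_coord_displace_le:
  fixes c :: "int \<Rightarrow> 'a::euclidean_space"
  assumes "D \<subseteq> UNIV \<times> Basis"
  shows "dist (coord_displace c D h t i) (c i) \<le> (\<Sum>d\<in>D. \<bar>h d t\<bar>)"
proof -
  have "dist (coord_displace c D h t i) (c i) = norm (\<Sum>d\<in>D. if fst d = i then h d t *\<^sub>R snd d else 0)"
    by (simp add: coord_displace_def dist_norm)
  also have "\<dots> \<le> (\<Sum>d\<in>D. norm (if fst d = i then h d t *\<^sub>R snd d else 0))"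
    by (rule norm_sum)
  also have "\<dots> \<le> (\<Sum>d\<in>D. \<bar>h d t\<bar>)"
    using assms by (intro sum_mono) auto
  finally show ?thesis .
qed

lemma has_vector_derivative_coord_displace:
  fixes G :: "(int \<Rightarrow> 'a::euclidean_space) \<Rightarrow> 'c::real_normed_vector"
  assumes S: "open S" "c \<in> S"
    and G': "\<And>p i b. p \<in> S \<Longrightarrow> b \<in> Basis \<Longrightarrow>
        ((\<lambda>s. G (p(i := p i + s *\<^sub>R b))) has_vector_derivative seq_partial (i, b) G p) (at 0)"
    and G'_cont: "\<And>i b. b \<in> Basis \<Longrightarrow> continuous_on S (seq_partial (i, b) G)"
    and D: "finite D" "D \<subseteq> UNIV \<times> Basis"
    and h: "\<And>d. d \<in> D \<Longrightarrow> (h d has_real_derivative h' d) (at 0)" "\<And>d. d \<in> D \<Longrightarrow> h d 0 = 0"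
  shows "((\<lambda>t. G (coord_displace c D h t)) has_vector_derivative
      (\<Sum>d\<in>D. h' d *\<^sub>R seq_partial d G c)) (at 0)"
  using D h
proof (induction D rule: finite_induct)
  case empty
  then show ?case by simp
next
  case (insert d D)
  obtain j b where d: "d = (j, b)" "b \<in> Basis" using insert.prems(1) by auto
  have cont: "isCont (h d') 0" if "d' \<in> D" for d'
    using insert.prems(2) that by (meson DERIV_isCont insertI2)
  have "((\<lambda>t. \<Sum>d\<in>D. \<bar>h d t\<bar>) \<longlongrightarrow> (\<Sum>d\<in>D. \<bar>h d 0\<bar>)) (at 0)"
    by (rule tendsto_sum, rule tendsto_rabs, rule isContD, rule cont)
  then have "((\<lambda>t. \<Sum>d\<in>D. \<bar>h d t\<bar>) \<longlongrightarrow> 0) (at 0)" using insert.prems(3) by simp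
  then have "((\<lambda>t. G ((coord_displace c D h t)(j := coord_displace c D h t j + h d t *\<^sub>R b)) -
      G (coord_displace c D h t)) has_vector_derivative h' d *\<^sub>R seq_partial (j, b) G c) (at 0)"
  proof (intro has_vector_derivative_coordinate_increment[OF S])
    show "((\<lambda>s. G (p(j := p j + s *\<^sub>R b))) has_vector_derivative seq_partial (j, b) G p) (at 0)"
      if "p \<in> S" for p
      using that d(2) by (rule G')
    show "continuous_on S (seq_partial (j, b) G)" using d(2) by (rule G'_cont)
    show "dist (coord_displace c D h t i) (c i) \<le> (\<Sum>d\<in>D. \<bar>h d t\<bar>)" for t i
      using insert.prems(1) by (intro dist_coord_displace_le) auto
    show "(h d has_real_derivative h' d) (at 0)" "h d 0 = 0" using insert.prems by auto
  qed
  from has_vector_derivative_add[OF this insert.IH] insert.prems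
  have "((\<lambda>t. G ((coord_displace c D h t)(j := coord_displace c D h t j + h d t *\<^sub>R b)))
      has_vector_derivative h' d *\<^sub>R seq_partial (j, b) G c + (\<Sum>d\<in>D. h' d *\<^sub>R seq_partial d G c)) (at 0)"
    by simp
  moreover have "(\<lambda>t. G (coord_displace c (insert d D) h t)) =
      (\<lambda>t. G ((coord_displace c D h t)(j := coord_displace c D h t j + h d t *\<^sub>R b)))"
    unfolding d(1) coord_displace_insert[OF insert.hyps[unfolded d(1)]] fst_conv snd_conv ..
  moreover have "(\<Sum>d\<in>insert d D. h' d *\<^sub>R seq_partial d G c) =
      h' d *\<^sub>R seq_partial (j, b) G c + (\<Sum>d\<in>D. h' d *\<^sub>R seq_partial d G c)"
    using insert.hyps d(1) by simp
  ultimately show ?case by (simp only:)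
qed

lemma has_vector_derivative_Cinf_seq_curve:
  fixes G :: "(int \<Rightarrow> 'a::euclidean_space) \<Rightarrow> 'c::real_normed_vector" and \<gamma> :: "real \<Rightarrow> int \<Rightarrow> 'a"
  assumes G: "Cinf_seq_on S G" "finite I" "depends_only I G"
    and \<gamma>: "\<gamma> 0 \<in> S" "\<And>i. i \<in> I \<Longrightarrow> ((\<lambda>t. \<gamma> t i) has_vector_derivative \<gamma>' i) (at 0)"
  shows "((\<lambda>t. G (\<gamma> t)) has_vector_derivative
      (\<Sum>d\<in>I \<times> Basis. (\<gamma>' (fst d) \<bullet> snd d) *\<^sub>R seq_partial d G (\<gamma> 0))) (at 0)"
proof -
  let ?c = "\<gamma> 0"
  define h where "h d t = (\<gamma> t (fst d) - ?c (fst d)) \<bullet> snd d" for d :: "int \<times> 'a" and t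
  have "((\<lambda>t. G (coord_displace ?c (I \<times> Basis) h t)) has_vector_derivative
      (\<Sum>d\<in>I \<times> Basis. (\<gamma>' (fst d) \<bullet> snd d) *\<^sub>R seq_partial d G ?c)) (at 0)"
  proof (rule has_vector_derivative_coord_displace)
    show "open S" using G(1) by (rule Cinf_seq_on_open)
    show "?c \<in> S" by (rule \<gamma>(1))
    show "((\<lambda>s. G (p(i := p i + s *\<^sub>R b))) has_vector_derivative seq_partial (i, b) G p) (at 0)"
      if "p \<in> S" "b \<in> Basis" for p i b
      using Cinf_seq_on_differentiable[OF G(1) that] by (rule has_vector_derivative_seq_partial)
    show "continuous_on S (seq_partial (i, b) G)" if "b \<in> Basis" for i b
      using Cinf_seq_on_partial[OF G(1) that] by (rule Cinf_seq_on_continuous)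
    show "finite (I \<times> Basis)" "I \<times> Basis \<subseteq> UNIV \<times> Basis" using G(2) by auto
    fix d :: "int \<times> 'a" assume "d \<in> I \<times> Basis"
    then have "((\<lambda>t. \<gamma> t (fst d) - ?c (fst d)) has_vector_derivative \<gamma>' (fst d) - 0) (at 0)"
      using \<gamma>(2) by (intro has_vector_derivative_diff) auto
    from bounded_linear.has_vector_derivative[OF bounded_linear_inner_left this]
    show "(h d has_real_derivative \<gamma>' (fst d) \<bullet> snd d) (at 0)"
      by (simp add: h_def[abs_def] has_real_derivative_iff_has_vector_derivative)
    show "h d 0 = 0" by (simp add: h_def)
  qed
  moreover have "G (coord_displace ?c (I \<times> Basis) h t) = G (\<gamma> t)" for t
  proof -
    have "coord_displace ?c (I \<times> Basis) h t i = \<gamma> t i" if "i \<in> I" for i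
    proof -
      have "(\<Sum>d\<in>I \<times> Basis. if fst d = i then h d t *\<^sub>R snd d else 0) =
          (\<Sum>i'\<in>I. \<Sum>b\<in>Basis. if i' = i then h (i', b) t *\<^sub>R b else 0)"
        unfolding sum.cartesian_product by (rule sum.cong) auto
      also have "\<dots> = (\<Sum>i'\<in>I. if i' = i then \<Sum>b\<in>Basis. h (i', b) t *\<^sub>R b else 0)"
        by (rule sum.cong) auto
      also have "\<dots> = \<gamma> t i - ?c i"
        using that G(2) by (simp add: h_def euclidean_representation)
      finally show ?thesis by (simp add: coord_displace_def)
    qed
    then show ?thesis using G(3) unfolding depends_only_def by metis
  qed
  ultimately show ?thesis by simp
qed

lemma has_vector_derivative_Cinf_seq_compose:
  fixes G :: "(int \<Rightarrow> 'a::euclidean_space) \<Rightarrow> 'c::real_normed_vector"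
    and \<Phi> :: "(int \<Rightarrow> 'e::euclidean_space) \<Rightarrow> int \<Rightarrow> 'a"
  assumes G: "Cinf_seq_on S G" "finite I" "depends_only I G"
    and \<Phi>: "\<And>i. Cinf_seq_on T (\<lambda>w. \<Phi> w i)" and w: "w \<in> T" "\<Phi> w \<in> S" and b: "b \<in> Basis"
  shows "((\<lambda>t. G (\<Phi> (w(j := w j + t *\<^sub>R b)))) has_vector_derivative
      (\<Sum>d\<in>I \<times> Basis. (seq_partial (j, b) (\<lambda>w. \<Phi> w (fst d)) w \<bullet> snd d) *\<^sub>R seq_partial d G (\<Phi> w))) (at 0)"
proof -
  have "((\<lambda>t. G (\<Phi> (w(j := w j + t *\<^sub>R b)))) has_vector_derivative
      (\<Sum>d\<in>I \<times> Basis. (seq_partial (j, b) (\<lambda>w. \<Phi> w (fst d)) w \<bullet> snd d) *\<^sub>R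
         seq_partial d G (\<Phi> (w(j := w j + 0 *\<^sub>R b))))) (at 0)"
  proof (rule has_vector_derivative_Cinf_seq_curve[OF G])
    show "\<Phi> (w(j := w j + 0 *\<^sub>R b)) \<in> S" using w(2) by simp
    show "((\<lambda>t. \<Phi> (w(j := w j + t *\<^sub>R b)) i) has_vector_derivative seq_partial (j, b) (\<lambda>w. \<Phi> w i) w) (at 0)"
      for i using Cinf_seq_on_differentiable[OF \<Phi> w(1) b] by (rule has_vector_derivative_seq_partial)
  qed
  then show ?thesis by simp
qed

lemma depends_only_seq_partial:
  assumes "depends_only I F"
  shows "depends_only I (seq_partial d F)"
  unfolding depends_only_def
proof (intro allI impI)
  fix w w' :: "int \<Rightarrow> 'a" assume "\<forall>i\<in>I. w i = w' i"
  then have "\<forall>i\<in>I. (w(fst d := w (fst d) + t *\<^sub>R snd d)) i = (w'(fst d := w' (fst d) + t *\<^sub>R snd d)) i" for t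
    by auto
  then have "(\<lambda>t. F (w(fst d := w (fst d) + t *\<^sub>R snd d))) = (\<lambda>t. F (w'(fst d := w' (fst d) + t *\<^sub>R snd d)))"
    using assms unfolding depends_only_def by blast
  then show "seq_partial d F w = seq_partial d F w'" by (simp add: seq_partial_def)
qed

lemma seq_smooth_upto_0_compose:
  fixes G :: "(int \<Rightarrow> 'a::euclidean_space) \<Rightarrow> 'c::real_normed_vector"
    and \<Phi> :: "(int \<Rightarrow> 'e::euclidean_space) \<Rightarrow> int \<Rightarrow> 'a"
  assumes G: "Cinf_seq_on S G" "finite I" "depends_only I G"
    and \<Phi>: "\<And>i. Cinf_seq_on T (\<lambda>w. \<Phi> w i)" and \<Phi>S: "\<And>w. w \<in> T \<Longrightarrow> \<Phi> w \<in> S"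
  shows "seq_smooth_upto 0 T (\<lambda>w. G (\<Phi> w))"
proof -
  have "continuous_on T \<Phi>"
    by (rule continuous_on_coordinatewise_then_product) (rule Cinf_seq_on_continuous[OF \<Phi>])
  then have "continuous_on T (\<lambda>w. G (\<Phi> w))"
    by (rule continuous_on_compose2[OF Cinf_seq_on_continuous[OF G(1)]]) (use \<Phi>S in auto)
  moreover have "(\<lambda>t. G (\<Phi> (w(j := w j + t *\<^sub>R b)))) differentiable (at 0)"
    if "w \<in> T" "b \<in> Basis" for w j b
    using has_vector_derivative_Cinf_seq_compose[OF G \<Phi> that(1) \<Phi>S[OF that(1)] that(2)]
    by (rule differentiableI_vector)
  moreover have "open T" using \<Phi> by (rule Cinf_seq_on_open)
  ultimately show ?thesis by simp
qed

lemma seq_smooth_upto_compose: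
  fixes G :: "(int \<Rightarrow> 'a::euclidean_space) \<Rightarrow> 'c::real_normed_vector"
    and \<Phi> :: "(int \<Rightarrow> 'e::euclidean_space) \<Rightarrow> int \<Rightarrow> 'a"
  assumes I: "finite I" and \<Phi>: "\<And>i. Cinf_seq_on T (\<lambda>w. \<Phi> w i)" and \<Phi>S: "\<And>w. w \<in> T \<Longrightarrow> \<Phi> w \<in> S"
  shows "Cinf_seq_on S G \<Longrightarrow> depends_only I G \<Longrightarrow> seq_smooth_upto n T (\<lambda>w. G (\<Phi> w))"
proof (induction n arbitrary: G)
  case 0
  show ?case by (rule seq_smooth_upto_0_compose[OF 0(1) I 0(2) \<Phi> \<Phi>S])
next
  case (Suc n)
  have "seq_smooth_upto n T (seq_partial (j, b) (\<lambda>w. G (\<Phi> w)))" if b: "b \<in> Basis" for j b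
  proof (rule seq_smooth_upto_cong)
    show "seq_smooth_upto n T (\<lambda>w. \<Sum>d\<in>I \<times> Basis.
        (seq_partial (j, b) (\<lambda>w. \<Phi> w (fst d)) w \<bullet> snd d) *\<^sub>R seq_partial d G (\<Phi> w))"
    proof (rule seq_smooth_upto_sum)
      show "finite (I \<times> (Basis :: 'a set))" using I by simp
      show "open T" using \<Phi> by (rule Cinf_seq_on_open)
      fix d :: "int \<times> 'a" assume d: "d \<in> I \<times> Basis"
      have "Cinf_seq_on T (seq_partial (j, b) (\<lambda>w. \<Phi> w (fst d)))"
        using \<Phi> b by (rule Cinf_seq_on_partial)
      then have "seq_smooth_upto n T (\<lambda>w. seq_partial (j, b) (\<lambda>w. \<Phi> w (fst d)) w \<bullet> snd d)"
        by (intro seq_smooth_upto_bounded_linear[OF bounded_linear_inner_left])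
          (simp add: Cinf_seq_on_iff_smooth_upto)
      moreover have "seq_smooth_upto n T (\<lambda>w. seq_partial d G (\<Phi> w))"
      proof (rule Suc.IH)
        show "Cinf_seq_on S (seq_partial d G)"
          using Cinf_seq_on_partial[OF Suc.prems(1), of "snd d" "fst d"] d by auto
        show "depends_only I (seq_partial d G)" using Suc.prems(2) by (rule depends_only_seq_partial)
      qed
      ultimately show "seq_smooth_upto n T (\<lambda>w.
          (seq_partial (j, b) (\<lambda>w. \<Phi> w (fst d)) w \<bullet> snd d) *\<^sub>R seq_partial d G (\<Phi> w))"
        by (rule seq_smooth_upto_scaleR)
    qed
    fix w assume "w \<in> T"
    from has_vector_derivative_Cinf_seq_compose[OF Suc.prems(1) I Suc.prems(2) \<Phi> this \<Phi>S[OF this] b]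
    show "(\<Sum>d\<in>I \<times> Basis. (seq_partial (j, b) (\<lambda>w. \<Phi> w (fst d)) w \<bullet> snd d) *\<^sub>R seq_partial d G (\<Phi> w)) =
        seq_partial (j, b) (\<lambda>w. G (\<Phi> w)) w"
      by (rule seq_partial_eqI[symmetric])
  qed
  then show ?case using seq_smooth_upto_0_compose[OF Suc.prems(1) I Suc.prems(2) \<Phi> \<Phi>S] by simp
qed

lemma Cinf_seq_on_compose:
  assumes "Cinf_seq_on S G" "finite I" "depends_only I G"
    and "\<And>i. Cinf_seq_on T (\<lambda>w. \<Phi> w i)" "\<And>w. w \<in> T \<Longrightarrow> \<Phi> w \<in> S"
  shows "Cinf_seq_on T (\<lambda>w. G (\<Phi> w))"
  using seq_smooth_upto_compose[OF assms(2,4,5) assms(1,3)] by (simp add: Cinf_seq_on_iff_smooth_upto)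

lemma Cinf_seq_on_compose_vimage:
  assumes G: "Cinf_seq_on S G" "finite I" "depends_only I G"
    and \<Phi>: "\<And>i. Cinf_seq_on T (\<lambda>w. \<Phi> w i)"
  shows "open (\<Phi> -` S \<inter> T)" "Cinf_seq_on (\<Phi> -` S \<inter> T) (\<lambda>w. G (\<Phi> w))"
proof -
  have "continuous_on T \<Phi>"
    by (rule continuous_on_coordinatewise_then_product) (rule Cinf_seq_on_continuous[OF \<Phi>])
  then show open_vimage: "open (\<Phi> -` S \<inter> T)"
    using Cinf_seq_on_open[OF G(1)] Cinf_seq_on_open[OF \<Phi>] continuous_on_open_vimage by blast
  show "Cinf_seq_on (\<Phi> -` S \<inter> T) (\<lambda>w. G (\<Phi> w))"
  proof (rule Cinf_seq_on_compose[OF G])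
    show "Cinf_seq_on (\<Phi> -` S \<inter> T) (\<lambda>w. \<Phi> w i)" for i
      using \<Phi> open_vimage by (rule Cinf_seq_on_subset) auto
  qed auto
qed

lemma iter_pd_seq_coordinate:
  "iter_pd_seq ds (\<lambda>c. h (c j)) =
     (\<lambda>c. if list_all (\<lambda>d. fst d = j) ds then iter_pd (map snd ds) h (c j) else 0)"
proof (induction ds)
  case Nil
  then show ?case by simp
next
  case (Cons d ds)
  show ?case
  proof (cases "list_all (\<lambda>d. fst d = j) ds")
    case True
    then show ?thesis using Cons.IH by (cases "fst d = j") (simp_all add: fun_eq_iff)
  next
    case False
    then have "iter_pd_seq ds (\<lambda>c. h (c j)) = (\<lambda>c. 0)" by (simp add: Cons.IH)
    then show ?thesis using False by (simp add: fun_eq_iff)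
  qed
qed

lemma Cinf_on_continuous: "Cinf_on U h \<Longrightarrow> continuous_on U h"
  unfolding Cinf_on_def using iter_pd.simps(1) by (metis empty_set empty_subsetI)

lemma Cinf_seq_on_coordinate:
  fixes h :: "'a::euclidean_space \<Rightarrow> 'b::real_normed_vector"
  assumes h: "Cinf_on U h"
  shows "Cinf_seq_on {c. c j \<in> U} (\<lambda>c. h (c j))"
  unfolding Cinf_seq_on_def
proof (intro conjI allI impI ballI)
  have U: "open U" using h by (simp add: Cinf_on_def)
  have "open ((\<lambda>c::int \<Rightarrow> 'a. c j) -` U)"
    by (rule open_vimage[OF U continuous_on_product_coordinates])
  then show "open {c::int \<Rightarrow> 'a. c j \<in> U}" by (simp add: vimage_def)
  fix ds :: "(int \<times> 'a) list" assume "\<forall>d\<in>set ds. snd d \<in> Basis"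
  then have ds: "set (map snd ds) \<subseteq> Basis" by auto
  have "continuous_on U (iter_pd (map snd ds) h)" using h ds by (simp add: Cinf_on_def)
  then have "continuous_on {c. c j \<in> U} (\<lambda>c. iter_pd (map snd ds) h (c j))"
    by (rule continuous_on_compose2)
      (auto intro: continuous_on_subset[OF continuous_on_product_coordinates])
  then show "continuous_on {c. c j \<in> U} (iter_pd_seq ds (\<lambda>c. h (c j)))"
    by (cases "list_all (\<lambda>d. fst d = j) ds") (simp_all add: iter_pd_seq_coordinate)
  fix w :: "int \<Rightarrow> 'a" and i and b :: 'a assume "w \<in> {c. c j \<in> U}" "b \<in> Basis"
  then have "(\<lambda>t. iter_pd (map snd ds) h (w j + t *\<^sub>R b)) differentiable (at 0)"
    using h ds by (simp add: Cinf_on_def)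
  then show "(\<lambda>t. iter_pd_seq ds (\<lambda>c. h (c j)) (w(i := w i + t *\<^sub>R b))) differentiable (at 0)"
    by (cases "list_all (\<lambda>d. fst d = j) ds"; cases "i = j") (simp_all add: iter_pd_seq_coordinate)
qed

lemma iter_pd_bounded_linear:
  assumes L: "bounded_linear L"
  shows "iter_pd ds L = (if ds = [] then L else if length ds = 1 then (\<lambda>_. L (hd ds)) else (\<lambda>_. 0))"
proof (induction ds)
  case Nil
  then show ?case by simp
next
  case (Cons d ds)
  have "vector_derivative (\<lambda>t. L (w + t *\<^sub>R d)) (at 0) = L d" for w
  proof (rule vector_derivative_at)
    have "((\<lambda>t. w + t *\<^sub>R d) has_vector_derivative d) (at 0)"
      by (auto intro!: derivative_eq_intros)
    then show "((\<lambda>t. L (w + t *\<^sub>R d)) has_vector_derivative L d) (at 0)"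
      by (rule bounded_linear.has_vector_derivative[OF L])
  qed
  then show ?case using Cons by (cases "ds = []") (simp_all add: fun_eq_iff)
qed

lemma Cinf_on_bounded_linear:
  fixes L :: "'a::euclidean_space \<Rightarrow> 'b::real_normed_vector"
  assumes L: "bounded_linear L"
  shows "Cinf_on UNIV L"
  unfolding Cinf_on_def
proof (intro conjI allI impI ballI)
  fix ds :: "'a list"
  show "continuous_on UNIV (iter_pd ds L)"
    by (simp add: iter_pd_bounded_linear[OF L] linear_continuous_on[OF L])
  fix w b :: 'a
  have "((\<lambda>t. L (w + t *\<^sub>R b)) has_vector_derivative L b) (at 0)"
    by (intro bounded_linear.has_vector_derivative[OF L]) (auto intro!: derivative_eq_intros)
  then show "(\<lambda>t. iter_pd ds L (w + t *\<^sub>R b)) differentiable (at 0)"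
    using differentiableI_vector by (simp add: iter_pd_bounded_linear[OF L]) blast
qed simp

lemma Cinf_seq_on_bounded_linear_coordinate:
  fixes L :: "'a::euclidean_space \<Rightarrow> 'b::real_normed_vector"
  assumes "bounded_linear L"
  shows "Cinf_seq_on UNIV (\<lambda>c. L (c j))"
  using Cinf_seq_on_coordinate[OF Cinf_on_bounded_linear[OF assms], of j] by simp

section \<open>Time reversal of trajectories\<close>

abbreviation joint_map :: "('x \<Rightarrow> 'u \<Rightarrow> 'a) \<Rightarrow> ('x \<Rightarrow> 'u \<Rightarrow> 'b) \<Rightarrow> 'x \<times> 'u \<Rightarrow> 'a \<times> 'b" where
  "joint_map f g \<equiv> \<lambda>p. (f (fst p) (snd p), g (fst p) (snd p))"

lemma local_diffeo_invE:
  assumes "local_diffeo_inv F G p"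
  obtains N where "open N" "p \<in> N" "open (F ` N)" "homeomorphism N (F ` N) F G"
    "Cinf_on N F" "Cinf_on (F ` N) G"
proof -
  obtain N where N: "open N" "p \<in> N" "open (F ` N)" "\<forall>a\<in>N. G (F a) = a" "Cinf_on N F" "Cinf_on (F ` N) G"
    using assms unfolding local_diffeo_inv_def by blast
  have "homeomorphism N (F ` N) F G"
    using N(4) Cinf_on_continuous[OF N(5)] Cinf_on_continuous[OF N(6)]
    by (intro homeomorphismI) auto
  with N that show ?thesis by blast
qed

lemma local_diffeo_inv_sym:
  assumes "local_diffeo_inv F G p"
  shows "local_diffeo_inv G F (F p)"
proof -
  obtain N where N: "open N" "p \<in> N" "open (F ` N)" "homeomorphism N (F ` N) F G"
    "Cinf_on N F" "Cinf_on (F ` N) G"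
    using assms by (rule local_diffeo_invE)
  have "G ` F ` N = N" using homeomorphism_image2[OF N(4)] .
  then show ?thesis
    unfolding local_diffeo_inv_def using N homeomorphism_apply2[OF N(4)]
    by (intro exI[of _ "F ` N"]) auto
qed

definition time_reversal :: "('x \<Rightarrow> 'u \<Rightarrow> 'x) \<Rightarrow> ('x \<Rightarrow> 'u \<Rightarrow> 'u)
    \<Rightarrow> (int \<Rightarrow> 'x) \<Rightarrow> (int \<Rightarrow> 'u) \<Rightarrow> (int \<Rightarrow> 'x) \<Rightarrow> (int \<Rightarrow> 'u) \<Rightarrow> bool" where
  "time_reversal f g x u z v \<longleftrightarrow>
     (\<forall>k. z k = x (- k) \<and> z k = f (x (- k - 1)) (u (- k - 1)) \<and> v k = g (x (- k - 1)) (u (- k - 1)))"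

lemma time_reversal_of_traj:
  assumes "is_traj f x u"
  shows "time_reversal f g x u (\<lambda>k. x (- k)) (\<lambda>k. g (x (- k - 1)) (u (- k - 1)))"
  unfolding time_reversal_def
proof (intro allI conjI refl)
  fix k :: int
  have "x ((- k - 1) + 1) = f (x (- k - 1)) (u (- k - 1))"
    using assms unfolding is_traj_def by blast
  then show "x (- k) = f (x (- k - 1)) (u (- k - 1))" by simp
qed

lemma time_reversal_imp_traj:
  assumes "time_reversal f g x u z v"
  shows "is_traj f x u"
  unfolding is_traj_def
proof
  fix t :: int
  show "x (t + 1) = f (x t) (u t)"
    using assms[unfolded time_reversal_def, rule_format, of "- t - 1"] by (auto simp: add.commute)
qed

lemma time_reversal_equilibrium:
  "f x0 u0 = x0 \<Longrightarrow> time_reversal f g (\<lambda>_. x0) (\<lambda>_. u0) (\<lambda>_. x0) (\<lambda>_. g x0 u0)"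
  by (simp add: time_reversal_def)

lemma traj_coords_const: "traj_coords g (\<lambda>_. x0) (\<lambda>_. u0) k = traj_coords g (\<lambda>_. x0) (\<lambda>_. u0) 0"
  by (simp add: traj_coords_def)

text \<open>The coordinate change behind \<^const>\<open>assoc_output\<close>: index 0 carries \<open>\<psi>(z, v) = (x, u)\<close>,
  and \<open>\<zeta>[-j] = v[j]\<close>, \<open>u[j] = \<eta>[-j]\<close> swap the indices of the input components.\<close>
definition assoc_coords :: "('x::zero \<Rightarrow> 'u \<Rightarrow> 'x) \<Rightarrow> ('x \<Rightarrow> 'u \<Rightarrow> 'u)
    \<Rightarrow> (int \<Rightarrow> 'x \<times> 'u) \<Rightarrow> int \<Rightarrow> 'x \<times> 'u" where
  "assoc_coords \<psi>x \<psi>u c =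
     (\<lambda>i. if i = 0 then joint_map \<psi>x \<psi>u (c 0) else (0, snd (c (- i))))"

lemma assoc_output_eq: "assoc_output \<psi>x \<psi>u \<phi> c = \<phi> (assoc_coords \<psi>x \<psi>u c)"
  by (simp add: assoc_output_def assoc_coords_def)

lemma assoc_coords_assoc_coords:
  assumes "\<And>i. i \<noteq> 0 \<Longrightarrow> fst (c i) = 0" "joint_map \<psi>x \<psi>u (joint_map f g (c 0)) = c 0"
  shows "assoc_coords \<psi>x \<psi>u (assoc_coords f g c) = c"
proof
  fix i :: int
  show "assoc_coords \<psi>x \<psi>u (assoc_coords f g c) i = c i"
    using assms(1)[of i] assms(2) by (cases "i = 0") (auto simp: assoc_coords_def prod_eq_iff)
qed

lemma time_reversal_assoc_traj:
  assumes rev: "time_reversal f g x u z v"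
    and inv: "\<And>k. joint_map \<psi>x \<psi>u (joint_map f g (x k, u k)) = (x k, u k)"
  shows "is_traj \<psi>x z v" and "assoc_coords \<psi>x \<psi>u (traj_coords \<psi>u z v k) = traj_coords g x u (- k - 1)"
proof -
  have zv: "z k = f (x (- k - 1)) (u (- k - 1))" "v k = g (x (- k - 1)) (u (- k - 1))" for k
    using rev unfolding time_reversal_def by blast+
  have \<psi>: "\<psi>x (z k) (v k) = x (- k - 1)" "\<psi>u (z k) (v k) = u (- k - 1)" for k
    using inv[of "- k - 1"] by (simp_all add: zv)
  show "is_traj \<psi>x z v"
    unfolding is_traj_def using rev \<psi> unfolding time_reversal_def by (simp add: algebra_simps)
  show "assoc_coords \<psi>x \<psi>u (traj_coords \<psi>u z v k) = traj_coords g x u (- k - 1)"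
  proof
    fix i :: int
    consider "i = 0" | "i < 0" | "i > 0" by linarith
    then show "assoc_coords \<psi>x \<psi>u (traj_coords \<psi>u z v k) i = traj_coords g x u (- k - 1) i"
    proof cases
      case 1
      then show ?thesis by (simp add: assoc_coords_def traj_coords_def \<psi>)
    next
      case 2
      then show ?thesis using zv(2)[of "k - i"] by (simp add: assoc_coords_def traj_coords_def algebra_simps)
    next
      case 3
      then show ?thesis using \<psi>(2)[of "k - i"] by (simp add: assoc_coords_def traj_coords_def algebra_simps)
    qed
  qed
qed

lemma time_reversal_assoc_output:
  fixes f :: "'x::zero \<Rightarrow> 'u \<Rightarrow> 'x"
  assumes rev: "time_reversal f g x u z v"
    and GF: "\<And>k. joint_map \<psi>x \<psi>u (joint_map f g (x k, u k)) = (x k, u k)"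
    and agree: "\<And>c. (\<forall>i. i \<noteq> 0 \<longrightarrow> fst (c i) = 0) \<Longrightarrow> joint_map f g (joint_map \<psi>x \<psi>u (c 0)) = c 0 \<Longrightarrow>
        \<phi>' c = \<phi> (assoc_coords \<psi>x \<psi>u c)"
  shows "\<phi>' (traj_coords \<psi>u z v k) = \<phi> (traj_coords g x u (- k - 1))"
proof -
  have "z k = f (x (- k - 1)) (u (- k - 1))" "v k = g (x (- k - 1)) (u (- k - 1))"
    using rev unfolding time_reversal_def by blast+
  then have "joint_map f g (joint_map \<psi>x \<psi>u (z k, v k)) = (z k, v k)"
    using GF[of "- k - 1"] by simp
  then have "\<phi>' (traj_coords \<psi>u z v k) = \<phi> (assoc_coords \<psi>x \<psi>u (traj_coords \<psi>u z v k))"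
    by (intro agree) (simp_all add: traj_coords_def)
  then show ?thesis
    using time_reversal_assoc_traj(2)[of f g x u z v \<psi>x \<psi>u, OF rev GF] by simp
qed

lemma time_reversal_of_assoc_traj:
  assumes "is_traj \<psi>x z v"
    and inv: "\<And>k. joint_map f g (joint_map \<psi>x \<psi>u (z k, v k)) = (z k, v k)"
  shows "time_reversal f g (\<lambda>t. z (- t)) (\<lambda>t. \<psi>u (z (- t - 1)) (v (- t - 1))) z v"
  unfolding time_reversal_def
proof (intro allI conjI)
  fix k :: int
  have "z (k + 1) = \<psi>x (z k) (v k)" using assms(1) unfolding is_traj_def by blast
  moreover have "- (- k - 1) = k + 1" "- (- k - 1) - 1 = k" by simp_all
  ultimately show "z k = z (- (- k))" "z k = f (z (- (- k - 1))) (\<psi>u (z (- (- k - 1) - 1)) (v (- (- k - 1) - 1)))"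
    "v k = g (z (- (- k - 1))) (\<psi>u (z (- (- k - 1) - 1)) (v (- (- k - 1) - 1)))"
    using inv[of k] by (simp_all only:) simp_all
qed

section \<open>Flat outputs of the associated system\<close>

definition recovers_trajs :: "('x \<Rightarrow> 'u \<Rightarrow> 'x) \<Rightarrow> ('x::zero \<Rightarrow> 'u \<Rightarrow> 'u) \<Rightarrow> ('x \<times> 'u) set
    \<Rightarrow> ((int \<Rightarrow> 'x \<times> 'u) \<Rightarrow> 'y) \<Rightarrow> ((int \<Rightarrow> 'y) \<Rightarrow> 'x) \<Rightarrow> ((int \<Rightarrow> 'y) \<Rightarrow> 'u) \<Rightarrow> bool" where
  "recovers_trajs f g N \<phi> Fx Fu \<longleftrightarrow>
     (\<forall>x u. is_traj f x u \<and> (\<forall>k. (x k, u k) \<in> N) \<longrightarrow>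
        (\<forall>k. x k = Fx (\<lambda>i. \<phi> (traj_coords g x u (k + i))) \<and> u k = Fu (\<lambda>i. \<phi> (traj_coords g x u (k + i)))))"

definition generates_trajs :: "('x \<Rightarrow> 'u \<Rightarrow> 'x) \<Rightarrow> ('x::zero \<Rightarrow> 'u \<Rightarrow> 'u) \<Rightarrow> 'y set
    \<Rightarrow> ((int \<Rightarrow> 'x \<times> 'u) \<Rightarrow> 'y) \<Rightarrow> ((int \<Rightarrow> 'y) \<Rightarrow> 'x) \<Rightarrow> ((int \<Rightarrow> 'y) \<Rightarrow> 'u) \<Rightarrow> bool" where
  "generates_trajs f g W \<phi> Fx Fu \<longleftrightarrow>
     (\<forall>y. (\<forall>k. y k \<in> W) \<longrightarrow>
        is_traj f (\<lambda>k. Fx (\<lambda>i. y (k + i))) (\<lambda>k. Fu (\<lambda>i. y (k + i))) \<and>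
        (\<forall>k. y k = \<phi> (traj_coords g (\<lambda>k. Fx (\<lambda>i. y (k + i))) (\<lambda>k. Fu (\<lambda>i. y (k + i))) k)))"

lemma flat_output_win_iff:
  "flat_output_win f g x0 u0 \<phi> r1 r2 \<longleftrightarrow>
    (\<exists>q1 q2 :: nat. depends_only {- int q1 .. int q2} \<phi>) \<and>
    (\<exists>S. traj_coords g (\<lambda>_. x0) (\<lambda>_. u0) 0 \<in> S \<and> Cinf_seq_on S \<phi>) \<and>
    (\<exists>Fx Fu. depends_only {- int r1 .. int r2 - 1} Fx \<and> depends_only {- int r1 .. int r2} Fu \<and>
       (\<exists>T. (\<lambda>_. \<phi> (traj_coords g (\<lambda>_. x0) (\<lambda>_. u0) 0)) \<in> T \<and> Cinf_seq_on T Fx \<and> Cinf_seq_on T Fu) \<and>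
       (\<exists>N W. open N \<and> (x0, u0) \<in> N \<and> open W \<and> \<phi> (traj_coords g (\<lambda>_. x0) (\<lambda>_. u0) 0) \<in> W \<and>
          recovers_trajs f g N \<phi> Fx Fu \<and> generates_trajs f g W \<phi> Fx Fu))"
  unfolding flat_output_win_def recovers_trajs_def generates_trajs_def Let_def ..

lemma recovers_trajs_equilibrium:
  assumes "recovers_trajs f g N \<phi> Fx Fu" "f x0 u0 = x0" "(x0, u0) \<in> N"
  shows "Fx (\<lambda>_. \<phi> (traj_coords g (\<lambda>_. x0) (\<lambda>_. u0) 0)) = x0"
    and "Fu (\<lambda>_. \<phi> (traj_coords g (\<lambda>_. x0) (\<lambda>_. u0) 0)) = u0"
proof -
  have "is_traj f (\<lambda>_. x0) (\<lambda>_. u0)" using assms(2) by (simp add: is_traj_def)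
  then have "x0 = Fx (\<lambda>i. \<phi> (traj_coords g (\<lambda>_. x0) (\<lambda>_. u0) (0 + i))) \<and>
      u0 = Fu (\<lambda>i. \<phi> (traj_coords g (\<lambda>_. x0) (\<lambda>_. u0) (0 + i)))"
    using assms(1,3) unfolding recovers_trajs_def by blast
  then show "Fx (\<lambda>_. \<phi> (traj_coords g (\<lambda>_. x0) (\<lambda>_. u0) 0)) = x0"
    "Fu (\<lambda>_. \<phi> (traj_coords g (\<lambda>_. x0) (\<lambda>_. u0) 0)) = u0"
    unfolding traj_coords_const[of g x0 u0 "0 + _"] by simp_all
qed

text \<open>Along the reversed trajectory the new output is \<open>\<hat>y(k) = y(-k-1)\<close>, so
  \<open>z(k) = x(-k)\<close> and \<open>v(k) = g(x(-k-1), u(-k-1))\<close> are these maps of windows of \<open>\<hat>y\<close>.\<close>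
definition assoc_param_x :: "((int \<Rightarrow> 'y) \<Rightarrow> 'x) \<Rightarrow> (int \<Rightarrow> 'y) \<Rightarrow> 'x" where
  "assoc_param_x Fx \<omega> = Fx (\<lambda>j. \<omega> (- j - 1))"

definition assoc_param_u :: "('x \<Rightarrow> 'u \<Rightarrow> 'u) \<Rightarrow> ((int \<Rightarrow> 'y) \<Rightarrow> 'x) \<Rightarrow> ((int \<Rightarrow> 'y) \<Rightarrow> 'u)
    \<Rightarrow> (int \<Rightarrow> 'y) \<Rightarrow> 'u" where
  "assoc_param_u g Fx Fu \<omega> = g (Fx (\<lambda>j. \<omega> (- j))) (Fu (\<lambda>j. \<omega> (- j)))"

lemma assoc_param_x_window: "assoc_param_x Fx (\<lambda>i. y (- k - 1 - i)) = Fx (\<lambda>i. y (- k + i))"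
  by (simp add: assoc_param_x_def algebra_simps)

lemma assoc_param_u_window:
  "assoc_param_u g Fx Fu (\<lambda>i. y (- k - 1 - i)) = g (Fx (\<lambda>i. y (- k - 1 + i))) (Fu (\<lambda>i. y (- k - 1 + i)))"
  by (simp add: assoc_param_u_def algebra_simps)

lemma recovers_trajs_assoc:
  fixes f :: "'x::{zero, topological_space} \<Rightarrow> 'u::topological_space \<Rightarrow> 'x"
  assumes hom: "homeomorphism N V (joint_map f g) (joint_map \<psi>x \<psi>u)"
    and rec: "recovers_trajs f g Nf \<phi> Fx Fu"
    and agree: "\<And>c. (\<forall>i. i \<noteq> 0 \<longrightarrow> fst (c i) = 0) \<Longrightarrow> joint_map f g (joint_map \<psi>x \<psi>u (c 0)) = c 0 \<Longrightarrow>
        \<phi>' c = \<phi> (assoc_coords \<psi>x \<psi>u c)"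
  shows "recovers_trajs \<psi>x \<psi>u (joint_map \<psi>x \<psi>u -` Nf \<inter> V) \<phi>' (assoc_param_x Fx) (assoc_param_u g Fx Fu)"
  unfolding recovers_trajs_def
proof (rule allI, rule allI, rule impI)
  fix z v assume "is_traj \<psi>x z v \<and> (\<forall>k. (z k, v k) \<in> joint_map \<psi>x \<psi>u -` Nf \<inter> V)"
  then have traj: "is_traj \<psi>x z v" and inV: "\<And>k. (z k, v k) \<in> V"
    and inNf: "\<And>k. joint_map \<psi>x \<psi>u (z k, v k) \<in> Nf"
    by auto
  have FG: "joint_map f g (joint_map \<psi>x \<psi>u (z k, v k)) = (z k, v k)" for k
    using homeomorphism_apply2[OF hom inV] .
  define x where "x = (\<lambda>t. z (- t))"
  define u where "u = (\<lambda>t. \<psi>u (z (- t - 1)) (v (- t - 1)))"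
  have rev: "time_reversal f g x u z v"
    unfolding x_def u_def using traj FG by (rule time_reversal_of_assoc_traj)
  have xu: "joint_map \<psi>x \<psi>u (z (- t - 1), v (- t - 1)) = (x t, u t)" for t
  proof -
    have "z ((- t - 1) + 1) = \<psi>x (z (- t - 1)) (v (- t - 1))" using traj unfolding is_traj_def by blast
    then show ?thesis by (simp add: x_def u_def)
  qed
  have x_in_Nf: "(x t, u t) \<in> Nf" for t
    using inNf[of "- t - 1"] unfolding xu .
  have "(x t, u t) \<in> N" for t
    using imageI[OF inV[of "- t - 1"], of "joint_map \<psi>x \<psi>u"] unfolding xu homeomorphism_image2[OF hom] .
  then have GF: "joint_map \<psi>x \<psi>u (joint_map f g (x k, u k)) = (x k, u k)" for k
    by (rule homeomorphism_apply1[OF hom])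
  define Y where "Y = (\<lambda>t. \<phi> (traj_coords g x u t))"
  have xu_param: "x k = Fx (\<lambda>i. Y (k + i)) \<and> u k = Fu (\<lambda>i. Y (k + i))" for k
    unfolding Y_def
    by (rule rec[unfolded recovers_trajs_def, rule_format, OF conjI[OF time_reversal_imp_traj[OF rev] allI[OF x_in_Nf]]])
  have y: "\<phi>' (traj_coords \<psi>u z v k) = Y (- k - 1)" for k
    unfolding Y_def by (rule time_reversal_assoc_output[of f g x u z v \<psi>x \<psi>u \<phi>' \<phi>, OF rev GF agree])
  have window: "(\<lambda>i. \<phi>' (traj_coords \<psi>u z v (k + i))) = (\<lambda>i. Y (- k - 1 - i))" for k
  proof
    fix i :: int
    have "- (k + i) - 1 = - k - 1 - i" by simp
    then show "\<phi>' (traj_coords \<psi>u z v (k + i)) = Y (- k - 1 - i)" by (simp only: y)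
  qed
  show "\<forall>k. z k = assoc_param_x Fx (\<lambda>i. \<phi>' (traj_coords \<psi>u z v (k + i))) \<and>
      v k = assoc_param_u g Fx Fu (\<lambda>i. \<phi>' (traj_coords \<psi>u z v (k + i)))"
  proof
    fix k
    have "z k = x (- k)" "v k = g (x (- k - 1)) (u (- k - 1))"
      using rev unfolding time_reversal_def by blast+
    then show "z k = assoc_param_x Fx (\<lambda>i. \<phi>' (traj_coords \<psi>u z v (k + i))) \<and>
        v k = assoc_param_u g Fx Fu (\<lambda>i. \<phi>' (traj_coords \<psi>u z v (k + i)))"
      unfolding window assoc_param_x_window assoc_param_u_window
      using xu_param[of "- k"] xu_param[of "- k - 1"] by simp
  qed
qed

lemma generates_trajs_assoc:
  fixes f :: "'x::{zero, topological_space} \<Rightarrow> 'u::topological_space \<Rightarrow> 'x"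
    and \<phi>' :: "(int \<Rightarrow> 'x \<times> 'u) \<Rightarrow> 'y"
  assumes hom: "homeomorphism N V (joint_map f g) (joint_map \<psi>x \<psi>u)"
    and gen: "generates_trajs f g W \<phi> Fx Fu" and "W' \<subseteq> W"
    and param_in_N: "\<And>\<omega>. (\<forall>i. \<omega> i \<in> W') \<Longrightarrow> (Fx \<omega>, Fu \<omega>) \<in> N"
    and agree: "\<And>c. (\<forall>i. i \<noteq> 0 \<longrightarrow> fst (c i) = 0) \<Longrightarrow> joint_map f g (joint_map \<psi>x \<psi>u (c 0)) = c 0 \<Longrightarrow>
        \<phi>' c = \<phi> (assoc_coords \<psi>x \<psi>u c)"
  shows "generates_trajs \<psi>x \<psi>u W' \<phi>' (assoc_param_x Fx) (assoc_param_u g Fx Fu)"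
  unfolding generates_trajs_def
proof (intro allI impI)
  fix y' :: "int \<Rightarrow> 'y" assume y': "\<forall>k. y' k \<in> W'"
  define y where "y = (\<lambda>t. y' (- t - 1))"
  define x where "x = (\<lambda>k. Fx (\<lambda>i. y (k + i)))"
  define u where "u = (\<lambda>k. Fu (\<lambda>i. y (k + i)))"
  define z where "z = (\<lambda>k. assoc_param_x Fx (\<lambda>i. y' (k + i)))"
  define v where "v = (\<lambda>k. assoc_param_u g Fx Fu (\<lambda>i. y' (k + i)))"
  have "y k \<in> W" for k using y' \<open>W' \<subseteq> W\<close> by (auto simp: y_def)
  from gen[unfolded generates_trajs_def, rule_format, of y, OF this]
  have traj: "is_traj f x u" and y: "\<And>k. y k = \<phi> (traj_coords g x u k)"
    unfolding x_def u_def by blast+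
  have "(x k, u k) \<in> N" for k
    unfolding x_def u_def using y' by (intro param_in_N) (simp add: y_def)
  then have GF: "joint_map \<psi>x \<psi>u (joint_map f g (x k, u k)) = (x k, u k)" for k
    by (rule homeomorphism_apply1[OF hom])
  have window: "(\<lambda>i. y' (k + i)) = (\<lambda>i. y (- k - 1 - i))" for k
    by (simp add: y_def fun_eq_iff add.commute)
  have "z k = x (- k)" "v k = g (x (- k - 1)) (u (- k - 1))" for k
    unfolding z_def v_def x_def u_def window assoc_param_x_window assoc_param_u_window by (rule refl)+
  then have rev: "time_reversal f g x u z v"
    using time_reversal_of_traj[OF traj, of g] unfolding time_reversal_def by simp
  have "y' k = \<phi>' (traj_coords \<psi>u z v k)" for k
    using time_reversal_assoc_output[of f g x u z v \<psi>x \<psi>u \<phi>' \<phi>, OF rev GF agree] y[of "- k - 1"]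
    by (simp add: y_def)
  with time_reversal_assoc_traj(1)[of f g x u z v \<psi>x \<psi>u, OF rev GF]
  have "is_traj \<psi>x z v \<and> (\<forall>k. y' k = \<phi>' (traj_coords \<psi>u z v k))" by blast
  then show "is_traj \<psi>x (\<lambda>k. assoc_param_x Fx (\<lambda>i. y' (k + i))) (\<lambda>k. assoc_param_u g Fx Fu (\<lambda>i. y' (k + i))) \<and>
      (\<forall>k. y' k = \<phi>' (traj_coords \<psi>u (\<lambda>k. assoc_param_x Fx (\<lambda>i. y' (k + i)))
        (\<lambda>k. assoc_param_u g Fx Fu (\<lambda>i. y' (k + i))) k))"
    unfolding z_def v_def .
qed

lemma depends_only_reindex:
  fixes F :: "('i \<Rightarrow> 'b) \<Rightarrow> 'c" and \<sigma> :: "'i \<Rightarrow> 'j"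
  assumes "depends_only I F" "\<And>i. i \<in> I \<Longrightarrow> \<sigma> i \<in> J"
  shows "depends_only J (\<lambda>\<omega>. F (\<lambda>i. \<omega> (\<sigma> i)))"
  unfolding depends_only_def
proof (intro allI impI)
  fix w w' :: "'j \<Rightarrow> 'b" assume "\<forall>i\<in>J. w i = w' i"
  then have "\<forall>i\<in>I. w (\<sigma> i) = w' (\<sigma> i)" using assms(2) by blast
  then show "F (\<lambda>i. w (\<sigma> i)) = F (\<lambda>i. w' (\<sigma> i))"
    using assms(1)[unfolded depends_only_def, rule_format, of "\<lambda>i. w (\<sigma> i)" "\<lambda>i. w' (\<sigma> i)"] by simp
qed

lemma depends_only_assoc_param_x:
  assumes "depends_only {- int r1 .. int r2 - 1} Fx"
  shows "depends_only {- int r2 .. int r1 - 1} (assoc_param_x Fx)"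
  unfolding assoc_param_x_def[abs_def] using assms by (rule depends_only_reindex) auto

lemma depends_only_assoc_param_u:
  assumes "depends_only {- int r1 .. int r2 - 1} Fx" "depends_only {- int r1 .. int r2} Fu"
  shows "depends_only {- int r2 .. int r1} (assoc_param_u g Fx Fu)"
proof -
  have "depends_only {- int r2 .. int r1} (\<lambda>\<omega>. Fx (\<lambda>j. \<omega> (- j)))"
    "depends_only {- int r2 .. int r1} (\<lambda>\<omega>. Fu (\<lambda>j. \<omega> (- j)))"
    by (rule depends_only_reindex[OF assms(1)], simp, rule depends_only_reindex[OF assms(2)], simp)
  then show ?thesis
    unfolding assoc_param_u_def[abs_def] depends_only_def by (intro allI impI arg_cong2[where f=g]) blast+
qed

lemma Cinf_seq_on_assoc_param:
  fixes Fx :: "(int \<Rightarrow> 'y::euclidean_space) \<Rightarrow> 'x::euclidean_space" and Fu :: "(int \<Rightarrow> 'y) \<Rightarrow> 'u::euclidean_space"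
  assumes Fx: "Cinf_seq_on T Fx" "finite I" "depends_only I Fx"
    and Fu: "Cinf_seq_on T Fu" "finite J" "depends_only J Fu"
    and fg: "Cinf_on N (joint_map f g)"
    and y0: "(\<lambda>_. y0) \<in> T" "(Fx (\<lambda>_. y0), Fu (\<lambda>_. y0)) \<in> N"
  obtains T' where "(\<lambda>_. y0) \<in> T'" "Cinf_seq_on T' (assoc_param_x Fx)" "Cinf_seq_on T' (assoc_param_u g Fx Fu)"
proof -
  have proj: "Cinf_seq_on UNIV (\<lambda>\<omega> :: int \<Rightarrow> 'y. \<omega> j)" for j
    using Cinf_seq_on_bounded_linear_coordinate[OF bounded_linear_ident] .
  define A1 where "A1 = (\<lambda>\<omega> j. \<omega> (- j - 1)) -` T \<inter> UNIV"
  have A1: "open A1" "Cinf_seq_on A1 (assoc_param_x Fx)"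
    using Cinf_seq_on_compose_vimage[OF Fx, where \<Phi>="\<lambda>\<omega> j. \<omega> (- j - 1)", OF proj]
    unfolding A1_def assoc_param_x_def[abs_def] by blast+
  define A0 where "A0 = (\<lambda>\<omega> j. \<omega> (- j)) -` T \<inter> UNIV"
  have A0: "open A0" "Cinf_seq_on A0 (\<lambda>\<omega>. Fx (\<lambda>j. \<omega> (- j)))" "Cinf_seq_on A0 (\<lambda>\<omega>. Fu (\<lambda>j. \<omega> (- j)))"
    using Cinf_seq_on_compose_vimage[OF Fx, where \<Phi>="\<lambda>\<omega> j. \<omega> (- j)", OF proj]
      Cinf_seq_on_compose_vimage[OF Fu, where \<Phi>="\<lambda>\<omega> j. \<omega> (- j)", OF proj]
    unfolding A0_def by blast+
  define \<Phi> where "\<Phi> \<omega> = (\<lambda>_ :: int. (Fx (\<lambda>j. \<omega> (- j)), Fu (\<lambda>j. \<omega> (- j))))" for \<omega>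
  have \<Phi>_smooth: "Cinf_seq_on A0 (\<lambda>\<omega>. \<Phi> \<omega> i)" for i
    unfolding \<Phi>_def using A0(2,3) by (rule Cinf_seq_on_Pair)
  have "finite {0::int}" "depends_only {0} (\<lambda>c :: int \<Rightarrow> 'x \<times> 'u. joint_map f g (c 0))"
    by (simp_all add: depends_only_def)
  from Cinf_seq_on_compose_vimage[OF Cinf_seq_on_coordinate[OF fg] this \<Phi>_smooth]
  have "open (\<Phi> -` {c. c 0 \<in> N} \<inter> A0)"
    "Cinf_seq_on (\<Phi> -` {c. c 0 \<in> N} \<inter> A0) (\<lambda>\<omega>. joint_map f g (\<Phi> \<omega> 0))" .
  then have A2: "open (\<Phi> -` {c. c 0 \<in> N} \<inter> A0)"
    "Cinf_seq_on (\<Phi> -` {c. c 0 \<in> N} \<inter> A0) (assoc_param_u g Fx Fu)"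
    using Cinf_seq_on_bounded_linear[OF bounded_linear_snd, of _ "\<lambda>\<omega>. joint_map f g (\<Phi> \<omega> 0)"]
    by (simp_all add: assoc_param_u_def[abs_def] \<Phi>_def)
  show ?thesis
  proof (rule that[of "A1 \<inter> (\<Phi> -` {c. c 0 \<in> N} \<inter> A0)"])
    show "(\<lambda>_. y0) \<in> A1 \<inter> (\<Phi> -` {c. c 0 \<in> N} \<inter> A0)"
      using y0 by (simp add: A1_def A0_def \<Phi>_def)
    show "Cinf_seq_on (A1 \<inter> (\<Phi> -` {c. c 0 \<in> N} \<inter> A0)) (assoc_param_x Fx)"
      using A1(2) by (rule Cinf_seq_on_subset) (use A1(1) A2(1) in auto)
    show "Cinf_seq_on (A1 \<inter> (\<Phi> -` {c. c 0 \<in> N} \<inter> A0)) (assoc_param_u g Fx Fu)"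
      using A2(2) by (rule Cinf_seq_on_subset) (use A1(1) A2(1) in auto)
  qed
qed

lemma Cinf_seq_on_assoc_coords:
  fixes \<psi>x :: "'x::euclidean_space \<Rightarrow> 'u::euclidean_space \<Rightarrow> 'x"
  assumes "Cinf_on V (joint_map \<psi>x \<psi>u)"
  shows "Cinf_seq_on {c. c 0 \<in> V} (\<lambda>c. assoc_coords \<psi>x \<psi>u c i)"
proof (cases "i = 0")
  case True
  then show ?thesis using Cinf_seq_on_coordinate[OF assms, of 0] by (simp add: assoc_coords_def)
next
  case False
  have "Cinf_seq_on UNIV (\<lambda>c :: int \<Rightarrow> 'x \<times> 'u. (0::'x, snd (c (- i))))"
    by (rule Cinf_seq_on_bounded_linear_coordinate[OF bounded_linear_Pair[OF bounded_linear_zero bounded_linear_snd]])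
  moreover have "open {c :: int \<Rightarrow> 'x \<times> 'u. c 0 \<in> V}"
    using Cinf_seq_on_coordinate[OF assms, of 0] by (rule Cinf_seq_on_open)
  ultimately have "Cinf_seq_on {c. c 0 \<in> V} (\<lambda>c :: int \<Rightarrow> 'x \<times> 'u. (0::'x, snd (c (- i))))"
    by (rule Cinf_seq_on_subset) simp
  then show ?thesis using False by (simp add: assoc_coords_def)
qed

lemma assoc_output_eq_fun: "assoc_output \<psi>x \<psi>u \<phi> = (\<lambda>c. \<phi> (assoc_coords \<psi>x \<psi>u c))"
  by (simp add: fun_eq_iff assoc_output_eq)

lemma depends_only_assoc_output:
  assumes "depends_only I \<phi>" "0 \<in> J" "\<And>i. i \<in> I \<Longrightarrow> - i \<in> J"
  shows "depends_only J (assoc_output \<psi>x \<psi>u \<phi>)"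
  unfolding depends_only_def assoc_output_eq
proof (intro allI impI)
  fix c c' :: "int \<Rightarrow> 'a \<times> 'b" assume "\<forall>i\<in>J. c i = c' i"
  then have "\<forall>i\<in>I. assoc_coords \<psi>x \<psi>u c i = assoc_coords \<psi>x \<psi>u c' i"
    using assms(2,3) by (auto simp: assoc_coords_def)
  then show "\<phi> (assoc_coords \<psi>x \<psi>u c) = \<phi> (assoc_coords \<psi>x \<psi>u c')"
    using assms(1) unfolding depends_only_def by blast
qed

lemma Cinf_seq_on_assoc_output:
  fixes f :: "'x::euclidean_space \<Rightarrow> 'u::euclidean_space \<Rightarrow> 'x"
  assumes diffeo: "local_diffeo_inv (joint_map f g) (joint_map \<psi>x \<psi>u) (x0, u0)"
    and eq: "f x0 u0 = x0"
    and dep: "\<exists>q1 q2 :: nat. depends_only {- int q1 .. int q2} \<phi>"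
    and smooth: "\<exists>S. traj_coords g (\<lambda>_. x0) (\<lambda>_. u0) 0 \<in> S \<and> Cinf_seq_on S \<phi>"
  shows "\<exists>S. traj_coords \<psi>u (\<lambda>_. x0) (\<lambda>_. g x0 u0) 0 \<in> S \<and> Cinf_seq_on S (assoc_output \<psi>x \<psi>u \<phi>)"
proof -
  obtain N where N: "open N" "(x0, u0) \<in> N" "open (joint_map f g ` N)"
      "homeomorphism N (joint_map f g ` N) (joint_map f g) (joint_map \<psi>x \<psi>u)"
      "Cinf_on N (joint_map f g)" "Cinf_on (joint_map f g ` N) (joint_map \<psi>x \<psi>u)"
    using diffeo by (rule local_diffeo_invE)
  obtain q1 q2 :: nat where dq: "depends_only {- int q1 .. int q2} \<phi>" using dep by blast
  obtain S where S: "traj_coords g (\<lambda>_. x0) (\<lambda>_. u0) 0 \<in> S" "Cinf_seq_on S \<phi>" using smooth by blast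
  let ?c0 = "traj_coords \<psi>u (\<lambda>_. x0) (\<lambda>_. g x0 u0) 0"
  let ?A = "assoc_coords \<psi>x \<psi>u -` S \<inter> {c. c 0 \<in> joint_map f g ` N}"
  have "finite {- int q1 .. int q2}" by simp
  from Cinf_seq_on_compose_vimage(2)[OF S(2) this dq Cinf_seq_on_assoc_coords[OF N(6)]]
  have "Cinf_seq_on ?A (\<lambda>c. \<phi> (assoc_coords \<psi>x \<psi>u c))" .
  moreover have "?c0 \<in> ?A"
  proof -
    have "assoc_coords \<psi>x \<psi>u ?c0 \<in> S"
      using time_reversal_assoc_traj(2)[of f g "\<lambda>_. x0" "\<lambda>_. u0" "\<lambda>_. x0" "\<lambda>_. g x0 u0" \<psi>x \<psi>u 0,
          OF time_reversal_equilibrium[of f x0 u0 g, OF eq] homeomorphism_apply1[OF N(4) N(2)]] S(1)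
      unfolding traj_coords_const[of g x0 u0 "- 0 - 1"] by simp
    moreover have "?c0 0 \<in> joint_map f g ` N"
      using rev_image_eqI[of "(x0, u0)" N "(x0, g x0 u0)" "joint_map f g"] N(2) eq
      by (simp add: traj_coords_def)
    ultimately show ?thesis by (intro IntI vimageI2 CollectI)
  qed
  ultimately show ?thesis unfolding assoc_output_eq_fun by (intro exI[of _ ?A] conjI)
qed

lemma flat_output_win_assoc:
  fixes f :: "'x::euclidean_space \<Rightarrow> 'u::euclidean_space \<Rightarrow> 'x"
    and \<phi> \<phi>' :: "(int \<Rightarrow> 'x \<times> 'u) \<Rightarrow> 'u"
  assumes diffeo: "local_diffeo_inv (joint_map f g) (joint_map \<psi>x \<psi>u) (x0, u0)"
    and eq: "f x0 u0 = x0"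
    and flat: "flat_output_win f g x0 u0 \<phi> r1 r2"
    and dep': "\<exists>q1 q2 :: nat. depends_only {- int q1 .. int q2} \<phi>'"
    and smooth': "\<exists>S. traj_coords \<psi>u (\<lambda>_. x0) (\<lambda>_. g x0 u0) 0 \<in> S \<and> Cinf_seq_on S \<phi>'"
    and agree: "\<And>c. (\<forall>i. i \<noteq> 0 \<longrightarrow> fst (c i) = 0) \<Longrightarrow> joint_map f g (joint_map \<psi>x \<psi>u (c 0)) = c 0 \<Longrightarrow>
        \<phi>' c = \<phi> (assoc_coords \<psi>x \<psi>u c)"
  shows "flat_output_win \<psi>x \<psi>u x0 (g x0 u0) \<phi>' r2 r1"
proof -
  obtain N where N: "open N" "(x0, u0) \<in> N" "open (joint_map f g ` N)"
      "homeomorphism N (joint_map f g ` N) (joint_map f g) (joint_map \<psi>x \<psi>u)"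
      "Cinf_on N (joint_map f g)" "Cinf_on (joint_map f g ` N) (joint_map \<psi>x \<psi>u)"
    using diffeo by (rule local_diffeo_invE)
  define V where "V = joint_map f g ` N"
  define y0 where "y0 = \<phi> (traj_coords g (\<lambda>_. x0) (\<lambda>_. u0) 0)"
  obtain Fx Fu T Nf Wf where
    Fx: "depends_only {- int r1 .. int r2 - 1} Fx" and Fu: "depends_only {- int r1 .. int r2} Fu"
    and T: "(\<lambda>_. y0) \<in> T" "Cinf_seq_on T Fx" "Cinf_seq_on T Fu"
    and Nf: "open Nf" "(x0, u0) \<in> Nf" and Wf: "open Wf" "y0 \<in> Wf"
    and rec: "recovers_trajs f g Nf \<phi> Fx Fu" and gen: "generates_trajs f g Wf \<phi> Fx Fu"
    using flat unfolding flat_output_win_iff y0_def[symmetric] by blast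
  have Fxu0: "Fx (\<lambda>_. y0) = x0" "Fu (\<lambda>_. y0) = u0"
    using recovers_trajs_equilibrium[OF rec eq Nf(2)] by (simp_all add: y0_def)
  have \<psi>0: "\<psi>x x0 (g x0 u0) = x0" "\<psi>u x0 (g x0 u0) = u0"
    using homeomorphism_apply1[OF N(4) N(2)] eq by simp_all
  have zv0: "(x0, g x0 u0) \<in> V"
    unfolding V_def using rev_image_eqI[of "(x0, u0)" N "(x0, g x0 u0)" "joint_map f g"] N(2) eq by simp
  have y0': "\<phi>' (traj_coords \<psi>u (\<lambda>_. x0) (\<lambda>_. g x0 u0) 0) = y0"
    using time_reversal_assoc_output[of f g "\<lambda>_. x0" "\<lambda>_. u0" "\<lambda>_. x0" "\<lambda>_. g x0 u0" \<psi>x \<psi>u \<phi>' \<phi> 0,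
        OF time_reversal_equilibrium[of f x0 u0 g, OF eq] homeomorphism_apply1[OF N(4) N(2)] agree]
    unfolding y0_def traj_coords_const[of g x0 u0 "- 0 - 1"] .
  have "(Fx (\<lambda>_. y0), Fu (\<lambda>_. y0)) \<in> N" using Fxu0 N(2) by simp
  with Cinf_seq_on_assoc_param[OF T(2) _ Fx T(3) _ Fu N(5) T(1)]
  obtain T' where T': "(\<lambda>_. y0) \<in> T'" "Cinf_seq_on T' (assoc_param_x Fx)"
    "Cinf_seq_on T' (assoc_param_u g Fx Fu)"
    by auto
  have "continuous_on T (\<lambda>\<omega>. (Fx \<omega>, Fu \<omega>))"
    using Cinf_seq_on_continuous[OF T(2)] Cinf_seq_on_continuous[OF T(3)] by (rule continuous_on_Pair)
  from this Cinf_seq_on_open[OF T(2)] T(1) N(1) \<open>(Fx (\<lambda>_. y0), Fu (\<lambda>_. y0)) \<in> N\<close> Wf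
  obtain W' where W': "open W'" "y0 \<in> W'" "W' \<subseteq> Wf" "\<And>\<omega>. (\<forall>i. \<omega> i \<in> W') \<Longrightarrow> (Fx \<omega>, Fu \<omega>) \<in> N"
    by (rule continuous_on_uniform_nbhd) blast
  define N' where "N' = joint_map \<psi>x \<psi>u -` Nf \<inter> V"
  have "open N'"
    unfolding N'_def V_def using Nf(1) N(3) homeomorphism_cont2[OF N(4)] continuous_on_open_vimage by blast
  moreover have "(x0, g x0 u0) \<in> N'" using \<psi>0 Nf(2) zv0 by (simp add: N'_def)
  moreover have "recovers_trajs \<psi>x \<psi>u N' \<phi>' (assoc_param_x Fx) (assoc_param_u g Fx Fu)"
    unfolding N'_def V_def using N(4) rec agree by (rule recovers_trajs_assoc)
  moreover have "generates_trajs \<psi>x \<psi>u W' \<phi>' (assoc_param_x Fx) (assoc_param_u g Fx Fu)"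
    using N(4) gen W'(3,4) agree by (rule generates_trajs_assoc)
  ultimately show ?thesis
    unfolding flat_output_win_iff y0'
    using dep' smooth' depends_only_assoc_param_x[OF Fx] depends_only_assoc_param_u[OF Fx Fu] T' W'(1,2)
    by blast
qed

lemma flat_output_win_assoc_output_iff:
  fixes f :: "'x::euclidean_space \<Rightarrow> 'u::euclidean_space \<Rightarrow> 'x"
    and \<phi> :: "(int \<Rightarrow> 'x \<times> 'u) \<Rightarrow> 'u"
  assumes eq: "f x0 u0 = x0"
    and diffeo: "local_diffeo_inv (joint_map f g) (joint_map \<psi>x \<psi>u) (x0, u0)"
    and flat: "flat_output f g x0 u0 \<phi>"
  shows "flat_output_win \<psi>x \<psi>u x0 (g x0 u0) (assoc_output \<psi>x \<psi>u \<phi>) r2 r1 \<longleftrightarrow>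
    flat_output_win f g x0 u0 \<phi> r1 r2"
proof -
  obtain s1 s2 where "flat_output_win f g x0 u0 \<phi> s1 s2" using flat unfolding flat_output_def by blast
  then have dep: "\<exists>q1 q2 :: nat. depends_only {- int q1 .. int q2} \<phi>"
    and smooth: "\<exists>S. traj_coords g (\<lambda>_. x0) (\<lambda>_. u0) 0 \<in> S \<and> Cinf_seq_on S \<phi>"
    unfolding flat_output_win_iff by blast+
  obtain N where "(x0, u0) \<in> N" "homeomorphism N (joint_map f g ` N) (joint_map f g) (joint_map \<psi>x \<psi>u)"
    using diffeo by (rule local_diffeo_invE)
  from homeomorphism_apply1[OF this(2,1)] eq
  have \<psi>0: "\<psi>x x0 (g x0 u0) = x0" "\<psi>u x0 (g x0 u0) = u0" by simp_all
  show ?thesis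
  proof
    assume assoc_flat: "flat_output_win \<psi>x \<psi>u x0 (g x0 u0) (assoc_output \<psi>x \<psi>u \<phi>) r2 r1"
    have "local_diffeo_inv (joint_map \<psi>x \<psi>u) (joint_map f g) (x0, g x0 u0)"
      using local_diffeo_inv_sym[OF diffeo] eq by simp
    then have "flat_output_win f g x0 (\<psi>u x0 (g x0 u0)) \<phi> r1 r2"
    proof (rule flat_output_win_assoc[of \<psi>x \<psi>u f g x0 "g x0 u0" "assoc_output \<psi>x \<psi>u \<phi>" r2 r1 \<phi>,
          OF _ \<psi>0(1) assoc_flat dep])
      show "\<exists>S. traj_coords g (\<lambda>_. x0) (\<lambda>_. \<psi>u x0 (g x0 u0)) 0 \<in> S \<and> Cinf_seq_on S \<phi>"
        using smooth by (simp add: \<psi>0)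
      show "\<phi> c = assoc_output \<psi>x \<psi>u \<phi> (assoc_coords f g c)"
        if "\<forall>i. i \<noteq> 0 \<longrightarrow> fst (c i) = 0" "joint_map \<psi>x \<psi>u (joint_map f g (c 0)) = c 0" for c
        using that by (simp add: assoc_output_eq assoc_coords_assoc_coords)
    qed
    then show "flat_output_win f g x0 u0 \<phi> r1 r2" by (simp add: \<psi>0)
  next
    assume "flat_output_win f g x0 u0 \<phi> r1 r2"
    then show "flat_output_win \<psi>x \<psi>u x0 (g x0 u0) (assoc_output \<psi>x \<psi>u \<phi>) r2 r1"
    proof (rule flat_output_win_assoc[of f g \<psi>x \<psi>u x0 u0 \<phi> r1 r2 "assoc_output \<psi>x \<psi>u \<phi>", OF diffeo eq])
      obtain q1 q2 :: nat where "depends_only {- int q1 .. int q2} \<phi>" using dep by blast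
      then have "depends_only {- int q2 .. int q1} (assoc_output \<psi>x \<psi>u \<phi>)"
        by (rule depends_only_assoc_output) auto
      then show "\<exists>q1 q2 :: nat. depends_only {- int q1 .. int q2} (assoc_output \<psi>x \<psi>u \<phi>)" by blast
      show "\<exists>S. traj_coords \<psi>u (\<lambda>_. x0) (\<lambda>_. g x0 u0) 0 \<in> S \<and> Cinf_seq_on S (assoc_output \<psi>x \<psi>u \<phi>)"
        using diffeo eq dep smooth by (rule Cinf_seq_on_assoc_output)
    qed (simp add: assoc_output_eq)
  qed
qed

theorem corollary1:
  fixes f :: "'x::euclidean_space \<Rightarrow> 'u::euclidean_space \<Rightarrow> 'x"
    and g :: "'x \<Rightarrow> 'u \<Rightarrow> 'u"
    and \<psi>x :: "'x \<Rightarrow> 'u \<Rightarrow> 'x" and \<psi>u :: "'x \<Rightarrow> 'u \<Rightarrow> 'u"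
    and x0 :: 'x and u0 :: 'u
    and \<phi> :: "(int \<Rightarrow> 'x \<times> 'u) \<Rightarrow> 'u"
  assumes f_smooth: "Cinf_on UNIV (\<lambda>p. f (fst p) (snd p))"
    and g_smooth: "Cinf_on UNIV (\<lambda>p. g (fst p) (snd p))"
    and rank_u: "\<forall>x u. dim (range (frechet_derivative (\<lambda>v. f x v) (at u))) = DIM('u)"
    and rank_xu: "\<forall>x u. dim (range (frechet_derivative (\<lambda>p. f (fst p) (snd p)) (at (x, u)))) = DIM('x)"
    and equilibrium: "f x0 u0 = x0"
    and diffeo: "local_diffeo_inv (\<lambda>p. (f (fst p) (snd p), g (fst p) (snd p)))
                                  (\<lambda>q. (\<psi>x (fst q) (snd q), \<psi>u (fst q) (snd q))) (x0, u0)"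
    and flat: "flat_output f g x0 u0 \<phi>"
  shows "(depends_only {i. 0 \<le> i} \<phi> \<longrightarrow>
            (backward_flat_output \<psi>x \<psi>u x0 (g x0 u0) (assoc_output \<psi>x \<psi>u \<phi>)
               \<longleftrightarrow> forward_flat_output f g x0 u0 \<phi>))
       \<and> (depends_only {i. i \<le> 0} \<phi> \<longrightarrow>
            (forward_flat_output \<psi>x \<psi>u x0 (g x0 u0) (assoc_output \<psi>x \<psi>u \<phi>)
               \<longleftrightarrow> backward_flat_output f g x0 u0 \<phi>))"
proof -
  have win: "flat_output_win \<psi>x \<psi>u x0 (g x0 u0) (assoc_output \<psi>x \<psi>u \<phi>) r2 r1 \<longleftrightarrow>
      flat_output_win f g x0 u0 \<phi> r1 r2" for r1 r2
    using equilibrium diffeo flat by (rule flat_output_win_assoc_output_iff)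
  have "depends_only {i. i \<le> 0} (assoc_output \<psi>x \<psi>u \<phi>)" if "depends_only {i. 0 \<le> i} \<phi>"
    using that by (rule depends_only_assoc_output) auto
  moreover have "depends_only {i. 0 \<le> i} (assoc_output \<psi>x \<psi>u \<phi>)" if "depends_only {i. i \<le> 0} \<phi>"
    using that by (rule depends_only_assoc_output) auto
  ultimately show ?thesis
    unfolding forward_flat_output_def backward_flat_output_def using win by blast
qed

end
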